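(* Let $\mathcal F=(F,<,+,0,\ldots)$ be a definably complete expansion of an ordered group. Let $G\subseteq F^m$ be a definably compact definable topological group and let $X\subseteq F^n$ be a definable $G$-set which is closed in $F^n$. Let $\varphi:X\to F$ be a definable continuous function. Then for every $x\in X$ the infimum $\inf\{\varphi(gx)\mid g\in G\}$ exists in $F$, so the function $\Phi:X\to F$, $\Phi(x)=\inf\{\varphi(gx)\mid g\in G\}$, is well-defined; moreover $\Phi$ is definable, $G$-invariant (i.e. $\Phi(gx)=\Phi(x)$ for all $g\in G$, $x\in X$) and continuous. In addition, for each $x\in X$ there exists $g_x\in G$ such that $\Phi(x)=\varphi(g_x x)$.
   Context: All topologies are the order topology on $F$ and the product topology on $F^k$. "Definable" means definable in $\mathcal F$ with parameters. $\mathcal F$ is definably complete if every definable subset of $F$ has a supremum and an infimum in $F\cup\{\pm\infty\}$. A definable topological group is a group $(G,\cdot)$ whose underlying set is a definable subset of some $F^m$ and whose multiplication and inverse maps are definable and continuous. A definable set is definably compact if it is closed and bounded in its ambient space $F^m$. A definable $G$-set is a definable set $X\subseteq F^n$ on which $G$ acts via a definable continuous map $G\times X\to X$, $(g,x)\mapsto gx$. *)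

theory Defs
  imports "HOL-Analysis.Analysis" "HOL-Algebra.Group"
begin

definition Fn :: "nat \<Rightarrow> (nat \<Rightarrow> 'a) set" where
  "Fn n = PiE {..<n} (\<lambda>_. UNIV)"

definition topF :: "nat \<Rightarrow> (nat \<Rightarrow> 'a::topological_space) topology" where
  "topF n = product_topology (\<lambda>_. euclidean) {..<n}"

definition tcat :: "nat \<Rightarrow> (nat \<Rightarrow> 'a) \<Rightarrow> (nat \<Rightarrow> 'a) \<Rightarrow> (nat \<Rightarrow> 'a)" where
  "tcat m x y = (\<lambda>i. if i < m then x i else y (i - m))"

definition tfst :: "nat \<Rightarrow> (nat \<Rightarrow> 'a) \<Rightarrow> (nat \<Rightarrow> 'a)" where
  "tfst m z = restrict z {..<m}"

definition tsnd :: "nat \<Rightarrow> nat \<Rightarrow> (nat \<Rightarrow> 'a) \<Rightarrow> (nat \<Rightarrow> 'a)" where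
  "tsnd m k z = (\<lambda>i\<in>{..<k}. z (m + i))"

definition tprod :: "nat \<Rightarrow> (nat \<Rightarrow> 'a) set \<Rightarrow> (nat \<Rightarrow> 'a) set \<Rightarrow> (nat \<Rightarrow> 'a) set" where
  "tprod m A B = {tcat m x y | x y. x \<in> A \<and> y \<in> B}"

definition tone :: "'a \<Rightarrow> (nat \<Rightarrow> 'a)" where
  "tone a = (\<lambda>i\<in>{..<1}. a)"

text \<open>A structure on F (collection of the definable sets, with parameters) expanding
  the ordered group (F,<,+,0): a family S n of subsets of F^n closed under boolean
  operations, cartesian product with F on either side, projection, containing the
  diagonals, the graph of <, the graph of +, and all singletons (parameters).\<close>
definition expansion_structure :: "(nat \<Rightarrow> (nat \<Rightarrow> 'a::linordered_ab_group_add) set set) \<Rightarrow> bool" where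
  "expansion_structure S \<longleftrightarrow>
     (\<forall>n. \<forall>A\<in>S n. A \<subseteq> Fn n) \<and>
     (\<forall>n. Fn n \<in> S n) \<and>
     (\<forall>n. \<forall>A\<in>S n. \<forall>B\<in>S n. A \<union> B \<in> S n) \<and>
     (\<forall>n. \<forall>A\<in>S n. Fn n - A \<in> S n) \<and>
     (\<forall>n. \<forall>A\<in>S n. {x \<in> Fn (Suc n). restrict x {..<n} \<in> A} \<in> S (Suc n)) \<and>
     (\<forall>n. \<forall>A\<in>S n. {x \<in> Fn (Suc n). (\<lambda>i\<in>{..<n}. x (Suc i)) \<in> A} \<in> S (Suc n)) \<and>
     (\<forall>n i j. i < n \<and> j < n \<longrightarrow> {x \<in> Fn n. x i = x j} \<in> S n) \<and>
     (\<forall>n. \<forall>A\<in>S (Suc n). (\<lambda>x. restrict x {..<n}) ` A \<in> S n) \<and>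
     {x \<in> Fn 2. x 0 < x 1} \<in> S 2 \<and>
     {x \<in> Fn 3. x 0 + x 1 = x 2} \<in> S 3 \<and>
     (\<forall>a. {x \<in> Fn 1. x 0 = a} \<in> S 1)"

definition is_sup :: "'a::linorder set \<Rightarrow> 'a \<Rightarrow> bool" where
  "is_sup B s \<longleftrightarrow> (\<forall>y\<in>B. y \<le> s) \<and> (\<forall>u. (\<forall>y\<in>B. y \<le> u) \<longrightarrow> s \<le> u)"

definition is_inf :: "'a::linorder set \<Rightarrow> 'a \<Rightarrow> bool" where
  "is_inf B s \<longleftrightarrow> (\<forall>y\<in>B. s \<le> y) \<and> (\<forall>u. (\<forall>y\<in>B. u \<le> y) \<longrightarrow> u \<le> s)"

text \<open>Definable completeness: every definable subset of F has a supremum and an infimum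
  in F \<union> {-\<infinity>,+\<infinity>}; i.e. every nonempty definable subset bounded above (below) has a
  least upper bound (greatest lower bound) in F (empty/unbounded sets have sup/inf \<plusminus>\<infinity>).\<close>
definition definably_complete :: "(nat \<Rightarrow> (nat \<Rightarrow> 'a::linordered_ab_group_add) set set) \<Rightarrow> bool" where
  "definably_complete S \<longleftrightarrow>
     (\<forall>A\<in>S 1. let B = (\<lambda>x. x 0) ` A in
        (B \<noteq> {} \<and> (\<exists>b. \<forall>y\<in>B. y \<le> b) \<longrightarrow> (\<exists>s. is_sup B s)) \<and>
        (B \<noteq> {} \<and> (\<exists>b. \<forall>y\<in>B. b \<le> y) \<longrightarrow> (\<exists>s. is_inf B s)))"

definition definable_map ::
  "(nat \<Rightarrow> (nat \<Rightarrow> 'a) set set) \<Rightarrow> nat \<Rightarrow> nat \<Rightarrow> (nat \<Rightarrow> 'a) set \<Rightarrow> ((nat \<Rightarrow> 'a) \<Rightarrow> (nat \<Rightarrow> 'a)) \<Rightarrow> bool" where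
  "definable_map S p k A f \<longleftrightarrow> (\<forall>x\<in>A. f x \<in> Fn k) \<and> {tcat p x (f x) | x. x \<in> A} \<in> S (p + k)"

definition definable_fun ::
  "(nat \<Rightarrow> (nat \<Rightarrow> 'a) set set) \<Rightarrow> nat \<Rightarrow> (nat \<Rightarrow> 'a) set \<Rightarrow> ((nat \<Rightarrow> 'a) \<Rightarrow> 'a) \<Rightarrow> bool" where
  "definable_fun S p A f \<longleftrightarrow> definable_map S p 1 A (\<lambda>x. tone (f x))"

definition definable_top_group ::
  "(nat \<Rightarrow> (nat \<Rightarrow> 'a::{linordered_ab_group_add,linorder_topology}) set set) \<Rightarrow> nat \<Rightarrow> (nat \<Rightarrow> 'a) monoid \<Rightarrow> bool" where
  "definable_top_group S m Gr \<longleftrightarrow>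
     group Gr \<and> carrier Gr \<in> S m \<and>
     definable_map S (m + m) m (tprod m (carrier Gr) (carrier Gr))
        (\<lambda>z. tfst m z \<otimes>\<^bsub>Gr\<^esub> tsnd m m z) \<and>
     definable_map S m m (carrier Gr) (\<lambda>g. inv\<^bsub>Gr\<^esub> g) \<and>
     continuous_map (subtopology (topF (m + m)) (tprod m (carrier Gr) (carrier Gr)))
        (subtopology (topF m) (carrier Gr)) (\<lambda>z. tfst m z \<otimes>\<^bsub>Gr\<^esub> tsnd m m z) \<and>
     continuous_map (subtopology (topF m) (carrier Gr)) (subtopology (topF m) (carrier Gr))
        (\<lambda>g. inv\<^bsub>Gr\<^esub> g)"

definition definably_compact :: "nat \<Rightarrow> (nat \<Rightarrow> 'a::{linorder,topological_space}) set \<Rightarrow> bool" where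
  "definably_compact m A \<longleftrightarrow> closedin (topF m) A \<and>
     (\<exists>a b. \<forall>x\<in>A. \<forall>i<m. a \<le> x i \<and> x i \<le> b)"

definition definable_G_set ::
  "(nat \<Rightarrow> (nat \<Rightarrow> 'a::{linordered_ab_group_add,linorder_topology}) set set) \<Rightarrow> nat \<Rightarrow> (nat \<Rightarrow> 'a) monoid \<Rightarrow>
   nat \<Rightarrow> (nat \<Rightarrow> 'a) set \<Rightarrow> ((nat \<Rightarrow> 'a) \<Rightarrow> (nat \<Rightarrow> 'a) \<Rightarrow> (nat \<Rightarrow> 'a)) \<Rightarrow> bool" where
  "definable_G_set S m Gr n X act \<longleftrightarrow>
     X \<in> S n \<and>
     (\<forall>g\<in>carrier Gr. \<forall>x\<in>X. act g x \<in> X) \<and>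
     (\<forall>x\<in>X. act \<one>\<^bsub>Gr\<^esub> x = x) \<and>
     (\<forall>g\<in>carrier Gr. \<forall>h\<in>carrier Gr. \<forall>x\<in>X. act (g \<otimes>\<^bsub>Gr\<^esub> h) x = act g (act h x)) \<and>
     definable_map S (m + n) n (tprod m (carrier Gr) X) (\<lambda>z. act (tfst m z) (tsnd m n z)) \<and>
     continuous_map (subtopology (topF (m + n)) (tprod m (carrier Gr) X))
        (subtopology (topF n) X) (\<lambda>z. act (tfst m z) (tsnd m n z))"

end

theory Submission
  imports Defs
begin

text \<open>Write phi_act(x, g) = \<phi>(g x) on the closed set X \<times> G, whose G-coordinates are bounded. The
  key tool is a definable tube lemma: if lower bounds for phi_act hold near every point of a fibre
  {x} \<times> G, then one of them holds on a neighbourhood of x. It is proved one coordinate at a time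
  by a continuous induction along the bounded coordinate, with definable completeness standing in
  for compactness; definability of the sets involved is what makes completeness applicable.
  The infimum \<Phi>(x) exists by definable completeness, since the tube lemma bounds phi_act below. If it
  were not attained, the tube lemma applied to strict lower bounds s < c would push the infimum
  above itself. The same argument gives lower semicontinuity of \<Phi>, and upper semicontinuity
  follows from continuity of phi_act at a minimiser. The graph of \<Phi> is first-order definable from
  \<phi> and the action, and \<Phi> is invariant because G(gx) = Gx.\<close>

lemma Fn_iff: "x \<in> Fn n \<longleftrightarrow> (\<forall>i. n \<le> i \<longrightarrow> x i = undefined)"
  by (auto simp: Fn_def PiE_def extensional_def)

lemma restrict_in_Fn [simp]: "restrict x {..<n} \<in> Fn n"
  by (simp add: Fn_iff)

lemma Fn_restrict_eq: "x \<in> Fn n \<Longrightarrow> restrict x {..<n} = x"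
  by (rule ext) (auto simp: Fn_iff)

lemma Fn_eqI: "x \<in> Fn n \<Longrightarrow> y \<in> Fn n \<Longrightarrow> (\<And>i. i < n \<Longrightarrow> x i = y i) \<Longrightarrow> x = y"
  by (rule ext) (metis Fn_iff not_less)

definition block :: "nat \<Rightarrow> nat \<Rightarrow> (nat \<Rightarrow> 'a) \<Rightarrow> (nat \<Rightarrow> 'a)" where
  "block ofs k x = (\<lambda>i\<in>{..<k}. x (ofs + i))"

lemma block_in_Fn [simp]: "block ofs k x \<in> Fn k"
  by (simp add: block_def Fn_iff)

lemma block_apply [simp]: "i < k \<Longrightarrow> block ofs k x i = x (ofs + i)"
  by (simp add: block_def)

lemma block_0: "block 0 k x = restrict x {..<k}"
  by (rule ext) (simp add: block_def)

lemma block_0_Fn [simp]: "x \<in> Fn k \<Longrightarrow> block 0 k x = x"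
  by (simp add: block_0 Fn_restrict_eq)

lemma block_block [simp]: "o1 + k \<le> K \<Longrightarrow> block o1 k (block o2 K x) = block (o2 + o1) k x"
  by (rule ext) (auto simp: block_def add.assoc)

lemma block_fun_upd [simp]: "ofs + k \<le> M \<Longrightarrow> block ofs k (x(M := t)) = block ofs k x"
  by (rule ext) (auto simp: block_def)

lemma tcat_less [simp]: "i < N \<Longrightarrow> tcat N x y i = x i"
  by (simp add: tcat_def)

lemma tcat_add [simp]: "tcat N x y (N + i) = y i"
  by (simp add: tcat_def)

lemma tcat_self [simp]: "tcat N x y N = y 0"
  by (simp add: tcat_def)

lemma tcat_in_Fn: "x \<in> Fn p \<Longrightarrow> y \<in> Fn q \<Longrightarrow> tcat p x y \<in> Fn (p + q)"
  by (auto simp: tcat_def Fn_iff)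

lemma tcat_inj:
  assumes "x \<in> Fn p" "x' \<in> Fn p" "y \<in> Fn q" "y' \<in> Fn q" "tcat p x y = tcat p x' y'"
  shows "x = x' \<and> y = y'"
proof
  show "x = x'"
    using fun_cong[OF assms(5)] by (intro Fn_eqI[OF assms(1,2)]) (metis tcat_less)
  show "y = y'"
    using fun_cong[OF assms(5)] by (intro ext) (metis tcat_add)
qed

lemma tcat_block_split: "z \<in> Fn (p + q) \<Longrightarrow> tcat p (block 0 p z) (block p q z) = z"
  by (rule ext) (auto simp: tcat_def block_def Fn_iff)

lemma restrict_tcat [simp]: "restrict (tcat N x y) {..<N} = restrict x {..<N}"
  by (rule ext) auto

lemma block_tcat_left [simp]: "ofs + k \<le> N \<Longrightarrow> block ofs k (tcat N x y) = block ofs k x"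
  by (rule ext) (auto simp: block_def)

lemma block_tcat_right [simp]: "y \<in> Fn k \<Longrightarrow> block N k (tcat N x y) = y"
  by (rule ext) (auto simp: block_def Fn_iff)

lemma block_0_tcat [simp]: "x \<in> Fn p \<Longrightarrow> block 0 p (tcat p x y) = x"
  by (simp add: block_0 Fn_restrict_eq)

lemma tfst_tcat [simp]: "x \<in> Fn p \<Longrightarrow> tfst p (tcat p x y) = x"
  by (simp add: tfst_def Fn_restrict_eq)

lemma tsnd_tcat [simp]: "y \<in> Fn q \<Longrightarrow> tsnd p q (tcat p x y) = y"
  by (rule ext) (auto simp: tsnd_def Fn_iff)

lemma tone_in_Fn [simp]: "tone a \<in> Fn 1" "tone a \<in> Fn (Suc 0)"
  by (simp_all add: tone_def Fn_iff)

lemma tone_0 [simp]: "tone a 0 = a"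
  by (simp add: tone_def)

lemma tone_inj: "tone a = tone b \<Longrightarrow> a = b"
  by (metis tone_0)

lemma block_1 [simp]: "block ofs 1 x = tone (x ofs)" "block ofs (Suc 0) x = tone (x ofs)"
  by (auto simp: block_def tone_def)

lemma tcat_tone_mem_graph_iff:
  assumes "A \<subseteq> Fn N" "x \<in> Fn N"
  shows "tcat N x (tone t) \<in> {tcat N y (tone (f y)) | y. y \<in> A} \<longleftrightarrow> x \<in> A \<and> f x = t"
proof
  assume "tcat N x (tone t) \<in> {tcat N y (tone (f y)) | y. y \<in> A}"
  then obtain y where "y \<in> A" "tcat N x (tone t) = tcat N y (tone (f y))" by blast
  with assms tcat_inj[OF assms(2) _ tone_in_Fn(1) tone_in_Fn(1)] show "x \<in> A \<and> f x = t"
    by (metis subsetD tone_inj)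
qed blast

lemma image_0_Fn_1: "(\<lambda>w. w 0) ` {w \<in> Fn 1. P (w 0)} = {t. P t}"
  by (auto intro!: image_eqI[of _ _ "tone t" for t])

lemma restrict_Suc_eq_upd:
  assumes "x \<in> Fn p" "restrict y {..<Suc p} = x(p := u)"
  shows "restrict y {..<p} = x"
proof (rule Fn_eqI[OF _ assms(1)])
  show "restrict y {..<p} i = x i" if "i < p" for i
    using fun_cong[OF assms(2), of i] that by simp
qed simp

lemma is_inf_unique: "is_inf B s \<Longrightarrow> is_inf B t \<Longrightarrow> s = t"
  unfolding is_inf_def by (meson order.antisym)


text \<open>A predicate on F^N stands for a first-order formula in the variables v_0, ..., v_(N-1);
  the rules below derive definability of its solution set from the closure properties of S.\<close>
definition definable_pred ::
  "(nat \<Rightarrow> (nat \<Rightarrow> 'a) set set) \<Rightarrow> nat \<Rightarrow> ((nat \<Rightarrow> 'a) \<Rightarrow> bool) \<Rightarrow> bool" where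
  "definable_pred S N P \<longleftrightarrow> {x \<in> Fn N. P x} \<in> S N"

locale expansion =
  fixes S :: "nat \<Rightarrow> (nat \<Rightarrow> 'a::{linordered_ab_group_add,linorder_topology}) set set"
  assumes es: "expansion_structure S"
begin

declare restrict_cong [cong]

lemma S_subset_Fn: "A \<in> S n \<Longrightarrow> A \<subseteq> Fn n"
  using es by (simp add: expansion_structure_def)

lemma Fn_in_S: "Fn n \<in> S n"
  using es by (simp add: expansion_structure_def)

lemma S_Un: "A \<in> S n \<Longrightarrow> B \<in> S n \<Longrightarrow> A \<union> B \<in> S n"
  using es by (simp add: expansion_structure_def)

lemma S_diff: "A \<in> S n \<Longrightarrow> Fn n - A \<in> S n"
  using es by (simp add: expansion_structure_def)

lemma S_cyl_left: "A \<in> S n \<Longrightarrow> {x \<in> Fn (Suc n). (\<lambda>i\<in>{..<n}. x (Suc i)) \<in> A} \<in> S (Suc n)"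
  using es by (simp add: expansion_structure_def)

lemma S_diag: "i < n \<Longrightarrow> j < n \<Longrightarrow> {x \<in> Fn n. x i = x j} \<in> S n"
  using es by (simp add: expansion_structure_def)

lemma S_proj: "A \<in> S (Suc n) \<Longrightarrow> (\<lambda>x. restrict x {..<n}) ` A \<in> S n"
  using es by (simp add: expansion_structure_def)

lemma S_less: "{x \<in> Fn 2. x 0 < x 1} \<in> S 2"
  using es by (simp add: expansion_structure_def)

lemma S_plus: "{x \<in> Fn 3. x 0 + x 1 = x 2} \<in> S 3"
  using es by (simp add: expansion_structure_def)

lemma S_eq_const: "{x \<in> Fn 1. x 0 = a} \<in> S 1"
  using es by (simp add: expansion_structure_def)

lemma S_Int:
  assumes "A \<in> S n" "B \<in> S n"
  shows "A \<inter> B \<in> S n"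
proof -
  have "A \<inter> B = Fn n - ((Fn n - A) \<union> (Fn n - B))"
    using S_subset_Fn[OF assms(1)] S_subset_Fn[OF assms(2)] by blast
  then show ?thesis using assms by (simp add: S_diff S_Un)
qed

lemma S_cyl_left_iter: "A \<in> S k \<Longrightarrow> {z \<in> Fn (j + k). (\<lambda>i\<in>{..<k}. z (j + i)) \<in> A} \<in> S (j + k)"
proof (induction j)
  case 0
  have eq: "{z \<in> Fn (0 + k). (\<lambda>i\<in>{..<k}. z (0 + i)) \<in> A} = A"
    using S_subset_Fn[OF 0] by (auto simp: Fn_restrict_eq)
  show ?case unfolding eq using 0 by simp
next
  case (Suc j)
  let ?L = "{z \<in> Fn (j + k). (\<lambda>i\<in>{..<k}. z (j + i)) \<in> A}"
  have "{x \<in> Fn (Suc (j + k)). (\<lambda>i\<in>{..<j+k}. x (Suc i)) \<in> ?L} \<in> S (Suc (j+k))"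
    using S_cyl_left[OF Suc.IH[OF Suc.prems]] .
  moreover have "{x \<in> Fn (Suc (j + k)). (\<lambda>i\<in>{..<j+k}. x (Suc i)) \<in> ?L}
     = {z \<in> Fn (Suc j + k). (\<lambda>i\<in>{..<k}. z (Suc j + i)) \<in> A}"
  proof -
    have "\<And>x. (\<lambda>i\<in>{..<k}. (\<lambda>i\<in>{..<j+k}. x (Suc i)) (j + i)) = (\<lambda>i\<in>{..<k}. x (Suc j + i))"
      by (rule ext) auto
    moreover have "\<And>x. (\<lambda>i\<in>{..<j+k}. x (Suc i)) \<in> Fn (j+k)" by (simp add: Fn_iff)
    ultimately show ?thesis by auto
  qed
  ultimately show ?case by (metis add_Suc)
qed

lemma S_proj_iter: "A \<in> S (k + j) \<Longrightarrow> (\<lambda>x. restrict x {..<k}) ` A \<in> S k"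
proof (induction j arbitrary: A)
  case 0
  have eq: "(\<lambda>x. restrict x {..<k}) ` A = A"
    using S_subset_Fn[OF 0[simplified]] by (force simp: Fn_restrict_eq)
  show ?case unfolding eq using 0 by simp
next
  case (Suc j)
  have "(\<lambda>x. restrict x {..<k+j}) ` A \<in> S (k+j)" using S_proj Suc.prems by simp
  from Suc.IH[OF this] have "(\<lambda>x. restrict x {..<k}) ` (\<lambda>x. restrict x {..<k+j}) ` A \<in> S k" .
  moreover have "(\<lambda>x. restrict x {..<k}) ` (\<lambda>x. restrict x {..<k+j}) ` A = (\<lambda>x. restrict x {..<k}) ` A"
  proof -
    have "\<And>x. restrict (restrict x {..<k+j}) {..<k} = restrict x {..<k}" by (rule ext) auto
    thus ?thesis by (simp add: image_image)
  qed
  ultimately show ?case by metis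
qed

lemma S_diag_all:
  "\<forall>i<(l::nat). f i < M \<and> g i < M \<Longrightarrow> {z \<in> Fn M. \<forall>i<l. z (f i) = z (g i)} \<in> S M"
proof (induction l)
  case 0
  then show ?case using Fn_in_S by simp
next
  case (Suc l)
  have eq: "{z \<in> Fn M. \<forall>i<Suc l. z (f i) = z (g i)} =
      {z \<in> Fn M. \<forall>i<l. z (f i) = z (g i)} \<inter> {z \<in> Fn M. z (f l) = z (g l)}"
    by (auto simp: less_Suc_eq)
  show ?case unfolding eq by (rule S_Int) (use Suc in \<open>auto intro: S_diag\<close>)
qed

lemma definable_pred_reindex:
  assumes A: "A \<in> S k" and v: "\<forall>i<k. v i < N"
  shows "definable_pred S N (\<lambda>x. (\<lambda>i\<in>{..<k}. x (v i)) \<in> A)"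
proof -
  let ?B = "{z \<in> Fn (N + k). (\<lambda>i\<in>{..<k}. z (N + i)) \<in> A} \<inter>
    {z \<in> Fn (N + k). \<forall>i<k. z (N + i) = z (v i)}"
  have B: "?B \<in> S (N + k)"
    by (rule S_Int[OF S_cyl_left_iter[OF A] S_diag_all]) (use v in auto)
  have "(\<lambda>x. restrict x {..<N}) ` ?B = {x \<in> Fn N. (\<lambda>i\<in>{..<k}. x (v i)) \<in> A}"
  proof (intro equalityI subsetI)
    fix x assume "x \<in> (\<lambda>x. restrict x {..<N}) ` ?B"
    then obtain z where z: "z \<in> ?B" and xz: "x = restrict z {..<N}" by blast
    have "(\<lambda>i\<in>{..<k}. x (v i)) = (\<lambda>i\<in>{..<k}. z (N + i))"
      using z v by (auto simp: xz intro!: ext)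
    thus "x \<in> {x \<in> Fn N. (\<lambda>i\<in>{..<k}. x (v i)) \<in> A}" using z xz by auto
  next
    fix x assume x: "x \<in> {x \<in> Fn N. (\<lambda>i\<in>{..<k}. x (v i)) \<in> A}"
    define z where
      "z = (\<lambda>i. if i < N then x i else if i < N + k then x (v (i - N)) else undefined)"
    have zF: "z \<in> Fn (N+k)" by (auto simp: z_def Fn_iff)
    have 1: "(\<lambda>i\<in>{..<k}. z (N + i)) = (\<lambda>i\<in>{..<k}. x (v i))" by (auto simp: z_def intro!: ext)
    have 2: "\<forall>i<k. z (N+i) = z (v i)" using v by (auto simp: z_def)
    have 3: "restrict z {..<N} = x" using x by (auto simp: z_def Fn_iff intro!: ext)
    show "x \<in> (\<lambda>x. restrict x {..<N}) ` ?B"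
      using zF 1 2 3 x by (auto intro!: image_eqI[of _ _ z])
  qed
  then show ?thesis using S_proj_iter[OF B] by (simp add: definable_pred_def)
qed

lemma definable_pred_cong:
  "definable_pred S N P \<Longrightarrow> (\<And>x. x \<in> Fn N \<Longrightarrow> P x = Q x) \<Longrightarrow> definable_pred S N Q"
  unfolding definable_pred_def by (metis (mono_tags, lifting) Collect_cong)

lemma definable_pred_conj:
  assumes "definable_pred S N P" "definable_pred S N Q"
  shows "definable_pred S N (\<lambda>x. P x \<and> Q x)"
proof -
  have "{x \<in> Fn N. P x \<and> Q x} = {x \<in> Fn N. P x} \<inter> {x \<in> Fn N. Q x}" by blast
  then show ?thesis using S_Int assms unfolding definable_pred_def by simp
qed

lemma definable_pred_not:
  assumes "definable_pred S N P"
  shows "definable_pred S N (\<lambda>x. \<not> P x)"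
proof -
  have "{x \<in> Fn N. \<not> P x} = Fn N - {x \<in> Fn N. P x}" by blast
  then show ?thesis using S_diff assms unfolding definable_pred_def by simp
qed

lemma definable_pred_disj:
  assumes "definable_pred S N P" "definable_pred S N Q"
  shows "definable_pred S N (\<lambda>x. P x \<or> Q x)"
proof -
  have "{x \<in> Fn N. P x \<or> Q x} = {x \<in> Fn N. P x} \<union> {x \<in> Fn N. Q x}" by blast
  then show ?thesis using S_Un assms unfolding definable_pred_def by simp
qed

lemma definable_pred_imp:
  "definable_pred S N P \<Longrightarrow> definable_pred S N Q \<Longrightarrow> definable_pred S N (\<lambda>x. P x \<longrightarrow> Q x)"
  by (rule definable_pred_cong[OF definable_pred_disj[OF definable_pred_not]]) auto

lemma definable_pred_True: "definable_pred S N (\<lambda>x. True)"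
  unfolding definable_pred_def using Fn_in_S by simp

lemma definable_pred_ex_upd:
  assumes "definable_pred S (Suc N) P"
  shows "definable_pred S N (\<lambda>x. \<exists>t. P (x(N := t)))"
proof -
  let ?A = "{y \<in> Fn (Suc N). P y}"
  have "(\<lambda>x. restrict x {..<N}) ` ?A \<in> S N" using S_proj assms by (simp add: definable_pred_def)
  moreover have "(\<lambda>x. restrict x {..<N}) ` ?A = {x \<in> Fn N. \<exists>t. P (x(N := t))}"
  proof (intro equalityI subsetI)
    fix x assume "x \<in> (\<lambda>x. restrict x {..<N}) ` ?A"
    then obtain y where y: "y \<in> Fn (Suc N)" "P y" and xy: "x = restrict y {..<N}" by blast
    have "y = x(N := y N)" using y(1) unfolding xy by (intro ext) (simp add: Fn_iff)
    with y have "P (x(N := y N))" by metis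
    moreover have "x \<in> Fn N" using xy by simp
    ultimately show "x \<in> {x \<in> Fn N. \<exists>t. P (x(N := t))}" by blast
  next
    fix x assume "x \<in> {x \<in> Fn N. \<exists>t. P (x(N := t))}"
    then obtain t where x: "x \<in> Fn N" "P (x(N := t))" by blast
    have "x(N := t) \<in> Fn (Suc N)" using x(1) by (auto simp: Fn_iff)
    moreover have "restrict (x(N := t)) {..<N} = x" using x(1) by (auto simp: Fn_iff intro!: ext)
    ultimately show "x \<in> (\<lambda>x. restrict x {..<N}) ` ?A"
      using x by (metis (mono_tags, lifting) image_eqI mem_Collect_eq)
  qed
  ultimately show ?thesis by (simp add: definable_pred_def)
qed

lemma definable_pred_ex:
  "definable_pred S (Suc N) P \<Longrightarrow> (\<And>x. x \<in> Fn N \<Longrightarrow> Q x = (\<exists>t. P (x(N := t)))) \<Longrightarrow>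
    definable_pred S N Q"
  by (rule definable_pred_cong[OF definable_pred_ex_upd]) auto

lemma definable_pred_all:
  "definable_pred S (Suc N) P \<Longrightarrow> (\<And>x. x \<in> Fn N \<Longrightarrow> Q x = (\<forall>t. P (x(N := t)))) \<Longrightarrow>
    definable_pred S N Q"
  by (rule definable_pred_cong[OF definable_pred_not[OF definable_pred_ex_upd[OF definable_pred_not]]])
    auto

lemma definable_pred_bex_tcat:
  "definable_pred S (N + k) P \<Longrightarrow> definable_pred S N (\<lambda>x. \<exists>y\<in>Fn k. P (tcat N x y))"
proof (induction k arbitrary: P)
  case 0
  show ?case
  proof (rule definable_pred_cong[OF 0[simplified]])
    fix x :: "nat \<Rightarrow> 'a" assume x: "x \<in> Fn N"
    have F0: "Fn 0 = {\<lambda>_. undefined}" by (auto simp: Fn_iff)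
    have "tcat N x (\<lambda>_. undefined) = x" using x by (auto simp: tcat_def Fn_iff intro!: ext)
    thus "P x = (\<exists>y\<in>Fn 0. P (tcat N x y))" by (simp add: F0)
  qed
next
  case (Suc k)
  have "definable_pred S (N + k) (\<lambda>w. \<exists>t. P (w(N + k := t)))"
    using definable_pred_ex_upd Suc.prems by simp
  from Suc.IH[OF this]
  have h: "definable_pred S N (\<lambda>x. \<exists>y\<in>Fn k. \<exists>t. P ((tcat N x y)(N + k := t)))" .
  show ?case
  proof (rule definable_pred_cong[OF h])
    fix x :: "nat \<Rightarrow> 'a" assume x: "x \<in> Fn N"
    show "(\<exists>y\<in>Fn k. \<exists>t. P ((tcat N x y)(N + k := t))) = (\<exists>y\<in>Fn (Suc k). P (tcat N x y))"
    proof
      assume "\<exists>y\<in>Fn k. \<exists>t. P ((tcat N x y)(N + k := t))"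
      then obtain y t where y: "y \<in> Fn k" "P ((tcat N x y)(N + k := t))" by blast
      have "(tcat N x y)(N + k := t) = tcat N x (y(k := t))"
        by (auto simp: tcat_def intro!: ext)
      moreover have "y(k := t) \<in> Fn (Suc k)" using y(1) by (auto simp: Fn_iff)
      ultimately show "\<exists>y\<in>Fn (Suc k). P (tcat N x y)" using y by metis
    next
      assume "\<exists>y\<in>Fn (Suc k). P (tcat N x y)"
      then obtain y where y: "y \<in> Fn (Suc k)" "P (tcat N x y)" by blast
      have "tcat N x y = (tcat N x (restrict y {..<k}))(N + k := y k)"
        using y(1) by (auto simp: tcat_def Fn_iff intro!: ext)
      thus "\<exists>y\<in>Fn k. \<exists>t. P ((tcat N x y)(N + k := t))" using y by (metis restrict_in_Fn)
    qed
  qed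
qed

lemma definable_pred_bex_Fn:
  "definable_pred S (N + k) P \<Longrightarrow> (\<And>x. x \<in> Fn N \<Longrightarrow> Q x = (\<exists>y\<in>Fn k. P (tcat N x y))) \<Longrightarrow>
    definable_pred S N Q"
  by (rule definable_pred_cong[OF definable_pred_bex_tcat]) auto

lemma definable_pred_ball_Fn:
  "definable_pred S (N + k) P \<Longrightarrow> (\<And>x. x \<in> Fn N \<Longrightarrow> Q x = (\<forall>y\<in>Fn k. P (tcat N x y))) \<Longrightarrow>
    definable_pred S N Q"
  by (rule definable_pred_cong[OF definable_pred_not[OF definable_pred_bex_tcat[OF definable_pred_not]]])
    auto

lemma definable_pred_block_mem:
  "A \<in> S k \<Longrightarrow> ofs + k \<le> N \<Longrightarrow> definable_pred S N (\<lambda>x. block ofs k x \<in> A)"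
  unfolding block_def by (rule definable_pred_reindex) auto

lemma definable_pred_block2_mem:
  assumes "A \<in> S (p + q)" "o1 + p \<le> N" "o2 + q \<le> N"
  shows "definable_pred S N (\<lambda>x. tcat p (block o1 p x) (block o2 q x) \<in> A)"
proof -
  let ?\<sigma> = "\<lambda>i. if i < p then o1 + i else o2 + (i - p)"
  have eq: "(\<lambda>i\<in>{..<p + q}. x (?\<sigma> i)) = tcat p (block o1 p x) (block o2 q x)" for x :: "nat \<Rightarrow> 'a"
    by (auto simp: tcat_def block_def intro!: ext)
  have "\<forall>i<p + q. ?\<sigma> i < N" using assms(2,3) by auto
  from definable_pred_reindex[OF assms(1) this] show ?thesis unfolding eq .
qed

lemma definable_pred_block3_mem:
  assumes "A \<in> S (p + q + r)" "o1 + p \<le> N" "o2 + q \<le> N" "o3 + r \<le> N"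
  shows "definable_pred S N (\<lambda>x. tcat (p + q) (tcat p (block o1 p x) (block o2 q x)) (block o3 r x) \<in> A)"
proof -
  let ?\<sigma> = "\<lambda>i. if i < p then o1 + i else if i < p + q then o2 + (i - p) else o3 + (i - p - q)"
  have eq: "(\<lambda>i\<in>{..<p + q + r}. x (?\<sigma> i)) =
      tcat (p + q) (tcat p (block o1 p x) (block o2 q x)) (block o3 r x)"
    for x :: "nat \<Rightarrow> 'a"
    by (auto simp: tcat_def block_def diff_diff_add intro!: ext)
  have "\<forall>i<p + q + r. ?\<sigma> i < N" using assms(2-4) by auto
  from definable_pred_reindex[OF assms(1) this] show ?thesis unfolding eq .
qed

lemma definable_pred_less:
  assumes "i < N" "j < N"
  shows "definable_pred S N (\<lambda>x. x i < x j)"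
proof (rule definable_pred_cong[OF definable_pred_reindex[OF S_less, of "\<lambda>l. if l = 0 then i else j" N]])
  fix x :: "nat \<Rightarrow> 'a"
  show "((\<lambda>l\<in>{..<2}. x (if l = 0 then i else j)) \<in> {x \<in> Fn 2. x 0 < x 1}) = (x i < x j)"
    by (auto simp: Fn_iff)
qed (use assms in auto)

lemma definable_pred_le:
  assumes "i < N" "j < N"
  shows "definable_pred S N (\<lambda>x. x i \<le> x j)"
  by (rule definable_pred_cong[OF definable_pred_not[OF definable_pred_less[OF assms(2,1)]]]) auto

lemma definable_pred_plus:
  assumes "i < N" "j < N" "k < N"
  shows "definable_pred S N (\<lambda>x. x i + x j = x k)"
proof (rule definable_pred_cong[OF definable_pred_reindex[OF S_plus,
      of "\<lambda>l. if l = 0 then i else if l = 1 then j else k" N]])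
  fix x :: "nat \<Rightarrow> 'a"
  show "((\<lambda>l\<in>{..<3}. x (if l = 0 then i else if l = 1 then j else k)) \<in> {x \<in> Fn 3. x 0 + x 1 = x 2}) =
      (x i + x j = x k)"
    by (auto simp: Fn_iff)
qed (use assms in auto)

lemma definable_pred_eq_const:
  assumes "i < N"
  shows "definable_pred S N (\<lambda>x. x i = c)"
proof (rule definable_pred_cong[OF definable_pred_reindex[OF S_eq_const, of "\<lambda>l. i" N]])
  fix x :: "nat \<Rightarrow> 'a"
  show "((\<lambda>l\<in>{..<1}. x i) \<in> {x \<in> Fn 1. x 0 = c}) = (x i = c)"
    by (auto simp: Fn_iff)
qed (use assms in auto)

lemma definable_pred_let_const:
  assumes "definable_pred S (Suc N) P" "\<And>x. x \<in> Fn N \<Longrightarrow> Q x = P (x(N := c))"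
  shows "definable_pred S N Q"
proof (rule definable_pred_ex[OF definable_pred_conj[OF definable_pred_eq_const[of N "Suc N" c] assms(1)]])
  fix x :: "nat \<Rightarrow> 'a" assume "x \<in> Fn N"
  then show "Q x = (\<exists>t. (x(N := t)) N = c \<and> P (x(N := t)))" using assms(2) by auto
qed simp

lemma definable_pred_let_plus:
  assumes "definable_pred S (Suc N) P" "i < N" "j < N"
    and "\<And>x. x \<in> Fn N \<Longrightarrow> Q x = P (x(N := x i + x j))"
  shows "definable_pred S N Q"
proof (rule definable_pred_ex[OF definable_pred_conj[OF definable_pred_plus[of i "Suc N" j N] assms(1)]])
  fix x :: "nat \<Rightarrow> 'a" assume "x \<in> Fn N"
  then show "Q x = (\<exists>t. (x(N := t)) i + (x(N := t)) j = (x(N := t)) N \<and> P (x(N := t)))"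
    using assms by auto
qed (use assms in auto)

lemma definable_pred_all_less:
  "(\<And>i. i < (p::nat) \<Longrightarrow> definable_pred S N (Q i)) \<Longrightarrow> definable_pred S N (\<lambda>x. \<forall>i<p. Q i x)"
proof (induction p)
  case 0
  then show ?case using definable_pred_True by simp
next
  case (Suc p)
  have "definable_pred S N (\<lambda>x. (\<forall>i<p. Q i x) \<and> Q p x)"
    using Suc by (intro definable_pred_conj) auto
  then show ?case by (rule definable_pred_cong) (auto simp: less_Suc_eq)
qed

lemma definable_pred_graph:
  assumes "definable_fun S N A f" "A \<subseteq> Fn N" "ofs + N \<le> M" "j < M"
  shows "definable_pred S M (\<lambda>v. block ofs N v \<in> A \<and> f (block ofs N v) = v j)"
proof -
  have "{tcat N x (tone (f x)) | x. x \<in> A} \<in> S (N + 1)"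
    using assms(1) unfolding definable_fun_def definable_map_def by blast
  from definable_pred_block2_mem[OF this assms(3), of j] show ?thesis
  proof (rule definable_pred_cong)
    fix v :: "nat \<Rightarrow> 'a"
    show "(tcat N (block ofs N v) (block j 1 v) \<in> {tcat N x (tone (f x)) | x. x \<in> A}) =
        (block ofs N v \<in> A \<and> f (block ofs N v) = v j)"
      using tcat_tone_mem_graph_iff[OF assms(2) block_in_Fn] by (simp only: block_1)
  qed (use assms(4) in simp)
qed

lemma definable_pred_graph2:
  assumes "definable_fun S (p + q) A f" "A \<subseteq> Fn (p + q)" "o1 + p \<le> M" "o2 + q \<le> M" "j < M"
  shows "definable_pred S M (\<lambda>v. tcat p (block o1 p v) (block o2 q v) \<in> A \<and>
    f (tcat p (block o1 p v) (block o2 q v)) = v j)"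
proof -
  have "{tcat (p + q) x (tone (f x)) | x. x \<in> A} \<in> S (p + q + 1)"
    using assms(1) unfolding definable_fun_def definable_map_def by blast
  from definable_pred_block3_mem[OF this assms(3,4), of j] show ?thesis
  proof (rule definable_pred_cong)
    fix v :: "nat \<Rightarrow> 'a"
    show "(tcat (p + q) (tcat p (block o1 p v) (block o2 q v)) (block j 1 v) \<in>
        {tcat (p + q) x (tone (f x)) | x. x \<in> A}) =
        (tcat p (block o1 p v) (block o2 q v) \<in> A \<and> f (tcat p (block o1 p v) (block o2 q v)) = v j)"
      using tcat_tone_mem_graph_iff[OF assms(2) tcat_in_Fn[OF block_in_Fn block_in_Fn]]
      by (simp only: block_1)
  qed (use assms(5) in simp)
qed

lemma definable_pred_ex':
  "definable_pred S M P \<Longrightarrow> M = Suc N \<Longrightarrow> (\<And>x. x \<in> Fn N \<Longrightarrow> Q x = (\<exists>t. P (x(N := t)))) \<Longrightarrow>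
    definable_pred S N Q"
  using definable_pred_ex by blast

lemma definable_pred_const_less: "j < M \<Longrightarrow> definable_pred S M (\<lambda>v. c < v j)"
  by (rule definable_pred_let_const[OF definable_pred_less[of M "Suc M" j], where c=c]) auto

lemma definable_pred_le_const: "j < M \<Longrightarrow> definable_pred S M (\<lambda>v. v j \<le> c)"
  by (rule definable_pred_cong[OF definable_pred_not[OF definable_pred_const_less[of j M c]]]) auto

lemma definable_pred_less_const_plus:
  assumes "j < M" "k < M"
  shows "definable_pred S M (\<lambda>v. v j < c + v k)"
proof (rule definable_pred_let_const[where c=c])
  show "definable_pred S (Suc M) (\<lambda>v. v j < v M + v k)"
    by (rule definable_pred_let_plus[OF definable_pred_less[of j "Suc (Suc M)" "Suc M"], of M k])
      (use assms in auto)
qed (use assms in auto)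

lemma definable_pred_const_less_plus:
  assumes "j < M" "k < M"
  shows "definable_pred S M (\<lambda>v. c < v j + v k)"
  by (rule definable_pred_let_plus[OF definable_pred_const_less[of M "Suc M"], of j k]) (use assms in auto)

lemma definable_pred_param:
  assumes P: "definable_pred S (N + k) P" and y: "y \<in> Fn k"
  shows "definable_pred S N (\<lambda>x. P (tcat N x y))"
proof (rule definable_pred_bex_Fn)
  show "definable_pred S (N + k) (\<lambda>v. P v \<and> (\<forall>i<k. v (N + i) = y i))"
    by (intro definable_pred_conj P definable_pred_all_less definable_pred_eq_const) simp
  fix x :: "nat \<Rightarrow> 'a"
  have "(\<forall>i<k. tcat N x y' (N + i) = y i) \<longleftrightarrow> y' = y" if "y' \<in> Fn k" for y'
    using Fn_eqI[OF that y] by auto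
  with y show "P (tcat N x y) =
      (\<exists>y'\<in>Fn k. P (tcat N x y') \<and> (\<forall>i<k. tcat N x y' (N + i) = y i))"
    by blast
qed

lemma definable_funI:
  assumes A: "A \<subseteq> Fn N"
    and graph: "definable_pred S (N + 1) (\<lambda>v. block 0 N v \<in> A \<and> f (block 0 N v) = v N)"
  shows "definable_fun S N A f"
proof -
  have "{tcat N x (tone (f x)) | x. x \<in> A} =
      {v \<in> Fn (N + 1). block 0 N v \<in> A \<and> f (block 0 N v) = v N}"
  proof (intro equalityI subsetI)
    fix v assume "v \<in> {tcat N x (tone (f x)) | x. x \<in> A}"
    then obtain x where "x \<in> A" "v = tcat N x (tone (f x))" by blast
    with A show "v \<in> {v \<in> Fn (N + 1). block 0 N v \<in> A \<and> f (block 0 N v) = v N}"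
      using tcat_in_Fn[OF _ tone_in_Fn(1)] by fastforce
  next
    fix v assume v: "v \<in> {v \<in> Fn (N + 1). block 0 N v \<in> A \<and> f (block 0 N v) = v N}"
    then have "v = tcat N (block 0 N v) (tone (f (block 0 N v)))"
      using tcat_block_split[of v N 1] by simp
    with v show "v \<in> {tcat N x (tone (f x)) | x. x \<in> A}" by blast
  qed
  with graph show ?thesis
    by (simp add: definable_fun_def definable_map_def definable_pred_def)
qed

lemma definably_complete_has_sup:
  assumes "definably_complete S" "definable_pred S 1 (\<lambda>w. P (w 0))"
    and "\<exists>t. P t" "\<exists>b. \<forall>t. P t \<longrightarrow> t \<le> b"
  shows "\<exists>s. is_sup {t. P t} s"
proof -
  have "let B = (\<lambda>w. w 0) ` {w \<in> Fn 1. P (w 0)} in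
      (B \<noteq> {} \<and> (\<exists>b. \<forall>y\<in>B. y \<le> b) \<longrightarrow> (\<exists>s. is_sup B s)) \<and>
      (B \<noteq> {} \<and> (\<exists>b. \<forall>y\<in>B. b \<le> y) \<longrightarrow> (\<exists>s. is_inf B s))"
    using assms(1,2) unfolding definably_complete_def definable_pred_def by blast
  with assms(3,4) show ?thesis
    unfolding image_0_Fn_1 Let_def by auto
qed

lemma definably_complete_has_inf:
  assumes "definably_complete S" "definable_pred S 1 (\<lambda>w. P (w 0))"
    and "\<exists>t. P t" "\<exists>b. \<forall>t. P t \<longrightarrow> b \<le> t"
  shows "\<exists>s. is_inf {t. P t} s"
proof -
  have "let B = (\<lambda>w. w 0) ` {w \<in> Fn 1. P (w 0)} in
      (B \<noteq> {} \<and> (\<exists>b. \<forall>y\<in>B. y \<le> b) \<longrightarrow> (\<exists>s. is_sup B s)) \<and>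
      (B \<noteq> {} \<and> (\<exists>b. \<forall>y\<in>B. b \<le> y) \<longrightarrow> (\<exists>s. is_inf B s))"
    using assms(1,2) unfolding definably_complete_def definable_pred_def by blast
  with assms(3,4) show ?thesis
    unfolding image_0_Fn_1 Let_def by auto
qed

end

definition in_box :: "nat \<Rightarrow> (nat \<Rightarrow> 'a::linordered_ab_group_add) \<Rightarrow> 'a \<Rightarrow> (nat \<Rightarrow> 'a) \<Rightarrow> bool"
  where
  "in_box p x e z \<longleftrightarrow> (\<forall>i<p. z i < x i + e \<and> x i < z i + e)"

lemma in_box_refl: "0 < e \<Longrightarrow> in_box p x e x"
  by (simp add: in_box_def)

lemma in_box_mono: "in_box p x e z \<Longrightarrow> e \<le> e' \<Longrightarrow> in_box p x e' z"
  unfolding in_box_def by (meson add_le_cancel_left order_less_le_trans)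

lemma all_less_add: "(\<forall>i<(p::nat) + k. P i) \<longleftrightarrow> (\<forall>i<p. P i) \<and> (\<forall>i<k. P (p + i))"
proof -
  have "i < p + k \<longleftrightarrow> i < p \<or> (\<exists>j<k. i = p + j)" for i
    by (auto intro: exI[of _ "i - p"])
  then show ?thesis by auto
qed

lemma in_box_tcat:
  "in_box (p + k) (tcat p x u) e (tcat p y v) \<longleftrightarrow> in_box p x e y \<and> in_box k u e v"
  unfolding in_box_def all_less_add by (simp add: tcat_def)

lemma in_box_Suc: "in_box (Suc p) x e z \<longleftrightarrow> in_box p x e z \<and> z p < x p + e \<and> x p < z p + e"
  by (auto simp: in_box_def less_Suc_eq)

lemma in_box_cong: "(\<forall>i<p. x' i = x i) \<Longrightarrow> in_box p x' e z = in_box p x e z"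
  by (simp add: in_box_def)

lemma in_box_tcat_left: "p \<le> K \<Longrightarrow> in_box p x e (tcat K y w) = in_box p x e y"
  by (simp add: in_box_def)

lemma topspace_topF [simp]: "topspace (topF n) = Fn n"
  by (simp add: topF_def Fn_def)

lemma open_interval_nbhd:
  fixes V :: "'a::{linordered_ab_group_add,linorder_topology} set"
  assumes "open V" "t \<in> V" "(0::'a) < e0"
  shows "\<exists>e>0. \<forall>y. y < t + e \<and> t < y + e \<longrightarrow> y \<in> V"
proof -
  obtain b where b: "b < t" "{b<..t} \<subseteq> V"
    using open_left[OF assms(1,2), of "t - e0"] assms(3) by auto
  obtain c where c: "c > t" "{t..<c} \<subseteq> V"
    using open_right[OF assms(1,2), of "t + e0"] assms(3) by auto
  show ?thesis
  proof (intro exI[of _ "min (t - b) (c - t)"] conjI allI impI)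
    show "0 < min (t - b) (c - t)" using b c by simp
    fix y assume "y < t + min (t - b) (c - t) \<and> t < y + min (t - b) (c - t)"
    then have y: "y < t + min (t - b) (c - t)" "t < y + min (t - b) (c - t)" by auto
    have "t < y + (t - b)"
      using y(2) min.cobounded1[of "t - b" "c - t"] by (meson add_le_cancel_left less_le_trans)
    moreover have "y < t + (c - t)"
      using y(1) min.cobounded2[of "t - b" "c - t"] by (meson add_le_cancel_left less_le_trans)
    ultimately have "b < y" "y < c" by (simp_all add: algebra_simps)
    then show "y \<in> V" using b c by (cases "y \<le> t") auto
  qed
qed

lemma Fn_in_box_eq: "{z \<in> Fn n. in_box n x e z} = PiE {..<n} (\<lambda>i. {x i - e <..< x i + e})"
  unfolding Fn_def in_box_def PiE_def Pi_def by (auto simp: diff_less_eq)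

lemma openin_box:
  fixes x :: "nat \<Rightarrow> 'a::{linordered_ab_group_add,linorder_topology}"
  shows "openin (topF n) {z \<in> Fn n. in_box n x e z}"
  unfolding Fn_in_box_eq topF_def openin_PiE_gen
  by (intro disjI2 conjI) (auto simp flip: open_openin)

lemma closedin_boxI:
  fixes A :: "(nat \<Rightarrow> 'a::{linordered_ab_group_add,linorder_topology}) set"
  assumes "A \<subseteq> Fn N" "\<And>x. x \<in> Fn N \<Longrightarrow> x \<notin> A \<Longrightarrow> \<exists>e>0. \<forall>z\<in>A. \<not> in_box N x e z"
  shows "closedin (topF N) A"
proof -
  obtain ee where ee: "\<And>x. x \<in> Fn N \<Longrightarrow> x \<notin> A \<Longrightarrow> 0 < ee x \<and> (\<forall>z\<in>A. \<not> in_box N x (ee x) z)"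
    using assms(2) by metis
  have "Fn N - A = \<Union>((\<lambda>x. {z \<in> Fn N. in_box N x (ee x) z}) ` (Fn N - A))"
  proof (intro equalityI subsetI)
    fix x assume "x \<in> Fn N - A"
    with ee in_box_refl show "x \<in> \<Union>((\<lambda>x. {z \<in> Fn N. in_box N x (ee x) z}) ` (Fn N - A))"
      by blast
  qed (use ee in blast)
  moreover have "openin (topF N) (\<Union>((\<lambda>x. {z \<in> Fn N. in_box N x (ee x) z}) ` (Fn N - A)))"
    using ee openin_box by (intro openin_Union) auto
  ultimately show ?thesis using assms(1) by (simp add: closedin_def)
qed

lemma openin_subtopology_boxI:
  fixes X :: "(nat \<Rightarrow> 'a::{linordered_ab_group_add,linorder_topology}) set"
  assumes "X \<subseteq> Fn n" "W \<subseteq> X" "\<And>x. x \<in> W \<Longrightarrow> \<exists>d>0. \<forall>y\<in>X. in_box n x d y \<longrightarrow> y \<in> W"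
  shows "openin (subtopology (topF n) X) W"
proof -
  obtain dd where dd: "\<And>x. x \<in> W \<Longrightarrow> 0 < dd x \<and> (\<forall>y\<in>X. in_box n x (dd x) y \<longrightarrow> y \<in> W)"
    using assms(3) by metis
  define T where "T = (\<Union>x\<in>W. {z \<in> Fn n. in_box n x (dd x) z})"
  have "openin (topF n) T"
    unfolding T_def by (intro openin_Union) (auto simp: openin_box)
  moreover have "W = T \<inter> X"
  proof (intro equalityI subsetI)
    fix x assume x: "x \<in> W"
    with assms(1,2) have "x \<in> X" "x \<in> Fn n" by blast+
    with x dd in_box_refl show "x \<in> T \<inter> X" unfolding T_def by blast
  next
    fix y assume "y \<in> T \<inter> X"
    with dd show "y \<in> W" unfolding T_def by blast
  qed
  ultimately show ?thesis
    unfolding openin_subtopology by blast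
qed

lemma continuous_map_euclidean_boxI:
  fixes f :: "(nat \<Rightarrow> 'a::{linordered_ab_group_add,linorder_topology}) \<Rightarrow> 'a"
  assumes X: "X \<subseteq> Fn p"
    and h: "\<And>x U. x \<in> X \<Longrightarrow> open U \<Longrightarrow> f x \<in> U \<Longrightarrow> \<exists>d>0. \<forall>y\<in>X. in_box p x d y \<longrightarrow> f y \<in> U"
  shows "continuous_map (subtopology (topF p) X) euclidean f"
proof -
  have tX: "topspace (subtopology (topF p) X) = X" using X by auto
  show ?thesis unfolding continuous_map_def tX
  proof (intro conjI allI impI)
    fix U :: "'a set" assume "openin euclidean U"
    hence "open U" by simp
    show "openin (subtopology (topF p) X) {x \<in> X. f x \<in> U}"
      by (rule openin_subtopology_boxI[OF X]) (use h \<open>open U\<close> in auto)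
  qed auto
qed

lemma box_continuous_lower_bound:
  fixes f :: "(nat \<Rightarrow> 'a::linordered_ab_group_add) \<Rightarrow> 'a"
  assumes cont: "\<And>\<epsilon>. 0 < \<epsilon> \<Longrightarrow> \<exists>\<delta>>0. \<forall>y\<in>X. in_box p x \<delta> y \<longrightarrow> f x < f y + \<epsilon>"
    and s: "s < f x"
  shows "\<exists>\<delta>>0. \<exists>c. s < c \<and> (\<forall>y\<in>X. in_box p x \<delta> y \<longrightarrow> c \<le> f y)"
proof (cases "\<exists>c. s < c \<and> c < f x")
  case True
  then obtain c where c: "s < c" "c < f x" by blast
  then obtain \<delta> where "0 < \<delta>" "\<forall>y\<in>X. in_box p x \<delta> y \<longrightarrow> f x < f y + (f x - c)"
    using cont[of "f x - c"] by auto
  moreover have "c \<le> f y" if "f x < f y + (f x - c)" for y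
    using that by (simp add: algebra_simps)
  ultimately show ?thesis using c(1) by blast
next
  case False
  \<comment> \<open>No value lies strictly between s and f x, so f y > s already forces f y \<ge> f x.\<close>
  obtain \<delta> where "0 < \<delta>" "\<forall>y\<in>X. in_box p x \<delta> y \<longrightarrow> f x < f y + (f x - s)"
    using cont[of "f x - s"] s by auto
  moreover have "f x \<le> f y" if "f x < f y + (f x - s)" for y
    using that False by (simp add: algebra_simps) (meson not_le)
  ultimately show ?thesis using s by blast
qed

text \<open>Boxes of positive radius are only available when F is not the trivial group, so the
  neighbourhood arguments below fix some positive e0.\<close>
context
  fixes e0 :: "'a::{linordered_ab_group_add,linorder_topology}"
  assumes e0: "0 < e0"
begin

lemma openin_boxD:
  fixes U :: "(nat \<Rightarrow> 'a) set"
  assumes "openin (topF n) U" "x \<in> U"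
  shows "\<exists>e>0. \<forall>z\<in>Fn n. in_box n x e z \<longrightarrow> z \<in> U"
proof -
  have "\<exists>V. finite {i \<in> {..<n}. V i \<noteq> topspace euclidean} \<and>
      (\<forall>i\<in>{..<n}. openin euclidean (V i)) \<and> x \<in> PiE {..<n} V \<and> PiE {..<n} V \<subseteq> U"
    using assms unfolding topF_def openin_product_topology_alt by blast
  then obtain V where V: "\<forall>i<n. open (V i)" "x \<in> PiE {..<n} V" "PiE {..<n} V \<subseteq> U"
    by auto
  have "\<exists>e>0. \<forall>y. y < x i + e \<and> x i < y + e \<longrightarrow> y \<in> V i" if "i < n" for i
    using open_interval_nbhd[OF _ _ e0] V(1,2) that by (simp add: PiE_iff)
  then obtain ee
    where ee: "\<And>i. i < n \<Longrightarrow> 0 < ee i \<and> (\<forall>y. y < x i + ee i \<and> x i < y + ee i \<longrightarrow> y \<in> V i)"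
    by metis
  define e where "e = Min (insert e0 (ee ` {..<n}))"
  have "0 < e"
    unfolding e_def using ee e0 by (subst Min_gr_iff) auto
  moreover have "z \<in> U" if z: "z \<in> Fn n" "in_box n x e z" for z
  proof -
    have "z i \<in> V i" if "i < n" for i
    proof -
      have "e \<le> ee i" unfolding e_def using that by simp
      with z(2) that have "z i < x i + ee i \<and> x i < z i + ee i"
        using in_box_mono unfolding in_box_def by blast
      with ee[OF that] show ?thesis by blast
    qed
    with z(1) have "z \<in> PiE {..<n} V" by (simp add: PiE_iff Fn_def)
    with V(3) show ?thesis by blast
  qed
  ultimately show ?thesis by blast
qed

lemma closedin_boxD:
  fixes A :: "(nat \<Rightarrow> 'a) set"
  assumes "closedin (topF N) A" "x \<in> Fn N" "x \<notin> A"
  shows "\<exists>e>0. \<forall>z\<in>A. \<not> in_box N x e z"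
proof -
  have "openin (topF N) (Fn N - A)" "A \<subseteq> Fn N" using assms(1) by (auto simp: closedin_def)
  from openin_boxD[OF this(1)] assms
  obtain e where "0 < e" "\<forall>z\<in>Fn N. in_box N x e z \<longrightarrow> z \<in> Fn N - A" by blast
  then show ?thesis using \<open>A \<subseteq> Fn N\<close> by blast
qed

lemma openin_subtopology_boxD:
  fixes X :: "(nat \<Rightarrow> 'a) set"
  assumes "X \<subseteq> Fn n" "openin (subtopology (topF n) X) W" "x \<in> W"
  shows "\<exists>d>0. \<forall>y\<in>X. in_box n x d y \<longrightarrow> y \<in> W"
proof -
  obtain T where T: "openin (topF n) T" "W = T \<inter> X"
    using assms(2) unfolding openin_subtopology by blast
  moreover have "x \<in> T" using assms(3) T(2) by blast
  ultimately obtain d where d: "0 < d" "\<forall>z\<in>Fn n. in_box n x d z \<longrightarrow> z \<in> T"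
    using openin_boxD by blast
  show ?thesis
  proof (intro exI[of _ d] conjI ballI impI d(1))
    fix y assume "y \<in> X" "in_box n x d y"
    with d(2) assms(1) T(2) show "y \<in> W" by blast
  qed
qed

lemma continuous_map_boxD:
  fixes X :: "(nat \<Rightarrow> 'a) set" and Y :: "(nat \<Rightarrow> 'a) set"
  assumes X: "X \<subseteq> Fn p" and Y: "Y \<subseteq> Fn q"
    and c: "continuous_map (subtopology (topF p) X) (subtopology (topF q) Y) h"
    and x: "x \<in> X" and e: "0 < e"
  shows "\<exists>d>0. \<forall>y\<in>X. in_box p x d y \<longrightarrow> in_box q (h x) e (h y)"
proof -
  have tX: "topspace (subtopology (topF p) X) = X" using X by auto
  have tY: "topspace (subtopology (topF q) Y) = Y" using Y by auto
  have hY: "\<And>y. y \<in> X \<Longrightarrow> h y \<in> Y" using c unfolding continuous_map_def tX tY by blast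
  let ?U = "{z \<in> Fn q. in_box q (h x) e z} \<inter> Y"
  have "openin (subtopology (topF q) Y) ?U"
    unfolding openin_subtopology using openin_box by blast
  then have "openin (subtopology (topF p) X) {y \<in> X. h y \<in> ?U}"
    using c unfolding continuous_map_def tX tY by blast
  moreover have "x \<in> {y \<in> X. h y \<in> ?U}" using x hY Y in_box_refl[OF e] by blast
  ultimately obtain d where "0 < d" "\<forall>y\<in>X. in_box p x d y \<longrightarrow> y \<in> {y \<in> X. h y \<in> ?U}"
    using openin_subtopology_boxD[OF X] by blast
  then show ?thesis by blast
qed

lemma continuous_map_euclidean_boxD:
  fixes f :: "(nat \<Rightarrow> 'a) \<Rightarrow> 'a"
  assumes X: "X \<subseteq> Fn p" and c: "continuous_map (subtopology (topF p) X) euclidean f"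
    and x: "x \<in> X" and e: "0 < e"
  shows "\<exists>d>0. \<forall>y\<in>X. in_box p x d y \<longrightarrow> f y < f x + e \<and> f x < f y + e"
proof -
  have tX: "topspace (subtopology (topF p) X) = X" using X by auto
  let ?U = "{f x - e <..< f x + e}"
  have "openin (subtopology (topF p) X) {y \<in> X. f y \<in> ?U}"
    using c unfolding continuous_map_def tX by (metis open_greaterThanLessThan open_openin)
  moreover have "x \<in> {y \<in> X. f y \<in> ?U}" using x e by auto
  ultimately obtain d where "0 < d" "\<forall>y\<in>X. in_box p x d y \<longrightarrow> y \<in> {y \<in> X. f y \<in> ?U}"
    using openin_subtopology_boxD[OF X] by blast
  then show ?thesis by (simp add: diff_less_eq) blast
qed

lemma closedin_block_prod:
  fixes A :: "(nat \<Rightarrow> 'a) set"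
  assumes A: "closedin (topF p) A" and B: "closedin (topF q) B"
  shows "closedin (topF (p + q)) {z \<in> Fn (p + q). block 0 p z \<in> A \<and> block p q z \<in> B}"
proof (rule closedin_boxI)
  fix z assume z: "z \<in> Fn (p + q)" "z \<notin> {z \<in> Fn (p + q). block 0 p z \<in> A \<and> block p q z \<in> B}"
  have box: "in_box (p + q) z e z' \<longleftrightarrow>
      in_box p (block 0 p z) e (block 0 p z') \<and> in_box q (block p q z) e (block p q z')"
    if "z' \<in> Fn (p + q)" for z' e
    using in_box_tcat[of p q "block 0 p z" "block p q z" e "block 0 p z'" "block p q z'"]
    by (simp add: tcat_block_split z(1) that)
  from z consider "block 0 p z \<notin> A" | "block p q z \<notin> B" by blast
  then show "\<exists>e>0. \<forall>z'\<in>{z \<in> Fn (p + q). block 0 p z \<in> A \<and> block p q z \<in> B}.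
      \<not> in_box (p + q) z e z'"
  proof cases
    case 1
    from closedin_boxD[OF A block_in_Fn 1] show ?thesis using box by blast
  next
    case 2
    from closedin_boxD[OF B block_in_Fn 2] show ?thesis using box by blast
  qed
qed auto

end

lemma continuous_induction:
  fixes D :: "'a::linorder \<Rightarrow> bool"
  assumes ab: "a \<le> b"
    and below: "\<And>t. t < a \<Longrightarrow> D t"
    and local: "\<And>u. a \<le> u \<Longrightarrow> u \<le> b \<Longrightarrow>
      \<exists>l r. l < u \<and> u < r \<and> (\<forall>t1 t2. l \<le> t1 \<longrightarrow> t2 < r \<longrightarrow> D t1 \<longrightarrow> D t2)"
    and sup: "{t. t \<le> b \<and> D t} \<noteq> {} \<Longrightarrow> \<exists>s. is_sup {t. t \<le> b \<and> D t} s"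
  shows "D b"
proof -
  let ?Y = "{t. t \<le> b \<and> D t}"
  obtain l0 r0 where "l0 < a" "a < r0" "\<forall>t1 t2. l0 \<le> t1 \<longrightarrow> t2 < r0 \<longrightarrow> D t1 \<longrightarrow> D t2"
    using local[OF order.refl ab] by blast
  with below ab have "a \<in> ?Y" by blast
  then obtain s where s: "is_sup ?Y s" using sup by blast
  with \<open>a \<in> ?Y\<close> have as: "a \<le> s" and sb: "s \<le> b"
    unfolding is_sup_def by auto
  obtain r where r: "s < r" "\<forall>t<r. D t"
  proof -
    obtain l r where lr: "l < s" "s < r" "\<forall>t1 t2. l \<le> t1 \<longrightarrow> t2 < r \<longrightarrow> D t1 \<longrightarrow> D t2"
      using local[OF as sb] by blast
    have "\<not> (\<forall>y\<in>?Y. y \<le> l)"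
    proof
      assume "\<forall>y\<in>?Y. y \<le> l"
      with s have "s \<le> l" unfolding is_sup_def by blast
      with lr(1) show False by simp
    qed
    then obtain t1 where "t1 \<in> ?Y" "l \<le> t1" by (auto simp: not_le intro: less_imp_le)
    with lr that show ?thesis by blast
  qed
  show "D b"
  proof (cases "b < r")
    case False
    \<comment> \<open>Then r \<le> b, and the local step at r puts r into the set, contradicting s < r.\<close>
    moreover have "a \<le> r" using as r(1) by simp
    ultimately obtain l' r' where "l' < r" "r < r'" "\<forall>t1 t2. l' \<le> t1 \<longrightarrow> t2 < r' \<longrightarrow> D t1 \<longrightarrow> D t2"
      using local[of r] by (auto simp: not_less)
    with r(2) have "D r" by blast
    with False s have "r \<le> s"
      unfolding is_sup_def by (simp add: not_less)
    with r(1) show ?thesis by simp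
  qed (use r in blast)
qed

context expansion
begin

lemma definable_pred_in_box:
  assumes "p \<le> K" "ofs + K \<le> M" "ie < M"
  shows "definable_pred S M (\<lambda>v. in_box p x (v ie) (block ofs K v))"
proof -
  have "definable_pred S M (\<lambda>v. \<forall>i<p. v (ofs + i) < x i + v ie \<and> x i < v (ofs + i) + v ie)"
    using assms
    by (intro definable_pred_all_less definable_pred_conj definable_pred_less_const_plus
        definable_pred_const_less_plus) auto
  then show ?thesis
    by (rule definable_pred_cong) (use assms in \<open>auto simp: in_box_def\<close>)
qed

lemma definable_pred_le_fun:
  assumes "definable_fun S N A f" "A \<subseteq> Fn N" "ofs + N \<le> M" "j < M"
  shows "definable_pred S M (\<lambda>v. block ofs N v \<in> A \<longrightarrow> v j \<le> f (block ofs N v))"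
proof (rule definable_pred_all)
  show "definable_pred S (Suc M) (\<lambda>v. block ofs N v \<in> A \<and> f (block ofs N v) = v M \<longrightarrow> v j \<le> v M)"
    using assms by (intro definable_pred_imp definable_pred_graph definable_pred_le) auto
qed (use assms in auto)

end

locale tube_setting = expansion S
  for S :: "nat \<Rightarrow> (nat \<Rightarrow> 'a::{linordered_ab_group_add,linorder_topology}) set set" +
  fixes N :: nat and A :: "(nat \<Rightarrow> 'a) set" and f :: "(nat \<Rightarrow> 'a) \<Rightarrow> 'a" and R :: "'a \<Rightarrow> bool"
    and a b :: 'a and p0 :: nat and e0 :: 'a
  assumes dc: "definably_complete S" and e0: "0 < e0"
    and A_in_S: "A \<in> S N" and A_closed: "closedin (topF N) A"
    and f_definable: "definable_fun S N A f"
    and R_definable: "definable_pred S 1 (\<lambda>w. R (w 0))" and R_nonempty: "\<exists>c. R c"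
    and R_min: "\<And>c1 c2. R c1 \<Longrightarrow> R c2 \<Longrightarrow> R (min c1 c2)"
    and ab: "a \<le> b" and A_bounded: "\<And>z i. z \<in> A \<Longrightarrow> p0 \<le> i \<Longrightarrow> i < N \<Longrightarrow> a \<le> z i \<and> z i \<le> b"
begin

lemma A_subset: "A \<subseteq> Fn N"
  using S_subset_Fn[OF A_in_S] .

definition locally_bounded :: "(nat \<Rightarrow> 'a) \<Rightarrow> bool" where
  "locally_bounded y \<longleftrightarrow> (\<exists>e>0. \<exists>c. R c \<and> (\<forall>z\<in>A. in_box N y e z \<longrightarrow> c \<le> f z))"

definition slab_bounded :: "nat \<Rightarrow> (nat \<Rightarrow> 'a) \<Rightarrow> 'a \<Rightarrow> bool" where
  "slab_bounded p x t \<longleftrightarrow> (\<exists>e>0. \<exists>c. R c \<and> (\<forall>z\<in>A. in_box p x e z \<and> z p \<le> t \<longrightarrow> c \<le> f z))"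

lemma definable_pred_R: "j < M \<Longrightarrow> definable_pred S M (\<lambda>v. R (v j))"
  using definable_pred_reindex[OF R_definable[unfolded definable_pred_def], of "\<lambda>_. j" M]
  by (rule definable_pred_cong) (simp_all add: Fn_iff)

lemma definable_pred_slab_bounded:
  assumes "p < N"
  shows "definable_pred S 1 (\<lambda>w. slab_bounded p x (w 0))"
proof -
  \<comment> \<open>Variables: t in 0, the radius in 1, the bound c in 2 and a point of A in 3..N+2.\<close>
  have "definable_pred S (3 + N) (\<lambda>v. in_box p x (v 1) (block 3 N v) \<and> v (3 + p) \<le> v 0 \<longrightarrow>
      (block 3 N v \<in> A \<longrightarrow> v 2 \<le> f (block 3 N v)))"
    using assms
    by (intro definable_pred_imp definable_pred_conj definable_pred_in_box definable_pred_le
        definable_pred_le_fun[OF f_definable A_subset]) auto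
  then have "definable_pred S 3 (\<lambda>v. \<forall>z\<in>A. in_box p x (v 1) z \<and> z p \<le> v 0 \<longrightarrow> v 2 \<le> f z)"
    by (rule definable_pred_ball_Fn) (use A_subset assms in auto)
  then have "definable_pred S 3 (\<lambda>v. R (v 2) \<and> (\<forall>z\<in>A. in_box p x (v 1) z \<and> z p \<le> v 0 \<longrightarrow> v 2 \<le> f z))"
    by (intro definable_pred_conj definable_pred_R) simp
  then have "definable_pred S 2 (\<lambda>v. \<exists>c. R c \<and> (\<forall>z\<in>A. in_box p x (v 1) z \<and> z p \<le> v 0 \<longrightarrow> c \<le> f z))"
    by (rule definable_pred_ex') simp_all
  then have "definable_pred S 2
      (\<lambda>v. 0 < v 1 \<and> (\<exists>c. R c \<and> (\<forall>z\<in>A. in_box p x (v 1) z \<and> z p \<le> v 0 \<longrightarrow> c \<le> f z)))"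
    by (intro definable_pred_conj definable_pred_const_less) simp
  then show ?thesis
    unfolding slab_bounded_def by (rule definable_pred_ex') simp_all
qed

lemma slab_bounded_below:
  assumes "p0 \<le> p" "p < N" "t < a"
  shows "slab_bounded p x t"
proof -
  obtain c where "R c" using R_nonempty by blast
  moreover have "\<not> z p \<le> t" if "z \<in> A" for z
    using A_bounded[OF that assms(1,2)] assms(3) by (meson dual_order.trans not_le)
  ultimately show ?thesis
    unfolding slab_bounded_def using e0 by blast
qed

text \<open>A bound on the box of radius e around x(p := u) in the first p + 1 coordinates carries slab
  bounds across u: below u - e the old slab bound applies, between u - e and u + e the box bound.\<close>
lemma slab_bounded_step:
  assumes box: "0 < e" "R c" "\<forall>z\<in>A. in_box (Suc p) (x(p := u)) e z \<longrightarrow> c \<le> f z"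
  shows "\<exists>l r. l < u \<and> u < r \<and>
    (\<forall>t1 t2. l \<le> t1 \<longrightarrow> t2 < r \<longrightarrow> slab_bounded p x t1 \<longrightarrow> slab_bounded p x t2)"
proof (intro exI conjI allI impI)
  show "u - e < u" "u < u + e" using box(1) by simp_all
  fix t1 t2 assume t: "u - e \<le> t1" "t2 < u + e" "slab_bounded p x t1"
  then obtain e1 c1 where ec1: "0 < e1" "R c1" "\<forall>z\<in>A. in_box p x e1 z \<and> z p \<le> t1 \<longrightarrow> c1 \<le> f z"
    unfolding slab_bounded_def by blast
  have "min c c1 \<le> f z" if z: "z \<in> A" "in_box p x (min e e1) z" "z p \<le> t2" for z
  proof (cases "z p \<le> t1")
    case True
    then have "c1 \<le> f z" using ec1(3) z(1) in_box_mono[OF z(2)] by simp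
    then show ?thesis by (simp add: min.coboundedI2)
  next
    case False
    have "in_box p (x(p := u)) e z"
      using in_box_cong[of p "x(p := u)" x] in_box_mono[OF z(2)] by simp
    moreover have "u - e < z p" "z p < u + e"
      using z(3) t(1,2) False by (meson not_le order.strict_trans1)+
    ultimately have "c \<le> f z" using box(3) z(1) by (simp add: in_box_Suc diff_less_eq)
    then show ?thesis by (simp add: min.coboundedI1)
  qed
  then show "slab_bounded p x t2"
    unfolding slab_bounded_def using box(1,2) ec1(1,2) R_min by (metis min_less_iff_conj)
qed

lemma slab_bounded_at_top:
  assumes p: "p0 \<le> p" "p < N"
    and box: "\<And>u. \<exists>e>0. \<exists>c. R c \<and> (\<forall>z\<in>A. in_box (Suc p) (x(p := u)) e z \<longrightarrow> c \<le> f z)"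
  shows "\<exists>e>0. \<exists>c. R c \<and> (\<forall>z\<in>A. in_box p x e z \<longrightarrow> c \<le> f z)"
proof -
  have "slab_bounded p x b"
  proof (rule continuous_induction[OF ab])
    show "slab_bounded p x t" if "t < a" for t
      using slab_bounded_below[OF p that] .
  next
    fix u
    from box[of u] show "\<exists>l r. l < u \<and> u < r \<and>
        (\<forall>t1 t2. l \<le> t1 \<longrightarrow> t2 < r \<longrightarrow> slab_bounded p x t1 \<longrightarrow> slab_bounded p x t2)"
      using slab_bounded_step by blast
  next
    assume ne: "{t. t \<le> b \<and> slab_bounded p x t} \<noteq> {}"
    have "definable_pred S 1 (\<lambda>w. w 0 \<le> b \<and> slab_bounded p x (w 0))"
      by (intro definable_pred_conj definable_pred_le_const definable_pred_slab_bounded[OF p(2)]) simp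
    then show "\<exists>s. is_sup {t. t \<le> b \<and> slab_bounded p x t} s"
      by (rule definably_complete_has_sup[OF dc]) (use ne in blast)+
  qed
  moreover have "z p \<le> b" if "z \<in> A" for z
    using A_bounded[OF that p] by simp
  ultimately show ?thesis
    unfolding slab_bounded_def by blast
qed

text \<open>Induction on the number k of coordinates not yet fixed: the fibre of A over a point
  x \<in> F^p is treated one coordinate at a time, each step using the bound of the remaining
  coordinates of A by a and b.\<close>
lemma tube_lemma:
  assumes "p + k = N" "p0 \<le> p" "x \<in> Fn p" "\<forall>y\<in>A. restrict y {..<p} = x \<longrightarrow> locally_bounded y"
  shows "\<exists>e>0. \<exists>c. R c \<and> (\<forall>z\<in>A. in_box p x e z \<longrightarrow> c \<le> f z)"
  using assms
proof (induction k arbitrary: p x)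
  case 0
  from "0.prems"(1,3) have N: "p = N" and x: "x \<in> Fn N" by simp_all
  show ?case
  proof (cases "x \<in> A")
    case True
    from bspec[OF "0.prems"(4) True] have "locally_bounded x"
      using Fn_restrict_eq[OF "0.prems"(3)] by simp
    then show ?thesis unfolding locally_bounded_def N .
  next
    case False
    obtain e where "0 < e" "\<forall>z\<in>A. \<not> in_box N x e z"
      using closedin_boxD[OF e0 A_closed x False] by blast
    with R_nonempty show ?thesis unfolding N by blast
  qed
next
  case (Suc k)
  from Suc.prems(1) have p: "p < N" by simp
  show ?case
  proof (rule slab_bounded_at_top[OF Suc.prems(2) p])
    fix u
    have "Suc p + k = N" "p0 \<le> Suc p" "x(p := u) \<in> Fn (Suc p)"
      using Suc.prems(1-3) by (auto simp: Fn_iff)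
    moreover have "\<forall>y\<in>A. restrict y {..<Suc p} = x(p := u) \<longrightarrow> locally_bounded y"
      using Suc.prems(4) restrict_Suc_eq_upd[OF Suc.prems(3)] by blast
    ultimately show "\<exists>e>0. \<exists>c. R c \<and> (\<forall>z\<in>A. in_box (Suc p) (x(p := u)) e z \<longrightarrow> c \<le> f z)"
      by (rule Suc.IH)
  qed
qed

end

locale orbit_setting = expansion S
  for S :: "nat \<Rightarrow> (nat \<Rightarrow> 'a::{linordered_ab_group_add,linorder_topology}) set set" +
  fixes Gr :: "(nat \<Rightarrow> 'a) monoid" and m n :: nat and X :: "(nat \<Rightarrow> 'a) set"
    and act :: "(nat \<Rightarrow> 'a) \<Rightarrow> (nat \<Rightarrow> 'a) \<Rightarrow> (nat \<Rightarrow> 'a)" and \<phi> :: "(nat \<Rightarrow> 'a) \<Rightarrow> 'a"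
    and e0 a b :: 'a
  assumes dc: "definably_complete S"
    and tg: "definable_top_group S m Gr"
    and G_closed: "closedin (topF m) (carrier Gr)"
    and G_bounded: "\<And>g i. g \<in> carrier Gr \<Longrightarrow> i < m \<Longrightarrow> a \<le> g i \<and> g i \<le> b"
    and gs: "definable_G_set S m Gr n X act"
    and X_closed: "closedin (topF n) X"
    and \<phi>_definable: "definable_fun S n X \<phi>"
    and \<phi>_continuous: "continuous_map (subtopology (topF n) X) euclidean \<phi>"
    and e0: "0 < e0" and ab: "a \<le> b"
begin

abbreviation "G \<equiv> carrier Gr"

lemma group_Gr: "group Gr"
  using tg unfolding definable_top_group_def by blast

lemma G_in_S: "G \<in> S m"
  using tg unfolding definable_top_group_def by blast

lemma G_subset: "G \<subseteq> Fn m"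
  using S_subset_Fn[OF G_in_S] .

lemma X_in_S: "X \<in> S n"
  using gs unfolding definable_G_set_def by blast

lemma X_subset: "X \<subseteq> Fn n"
  using S_subset_Fn[OF X_in_S] .

lemma act_closed: "g \<in> G \<Longrightarrow> x \<in> X \<Longrightarrow> act g x \<in> X"
  using gs unfolding definable_G_set_def by blast

lemma act_mult: "g \<in> G \<Longrightarrow> h \<in> G \<Longrightarrow> x \<in> X \<Longrightarrow> act (g \<otimes>\<^bsub>Gr\<^esub> h) x = act g (act h x)"
  using gs unfolding definable_G_set_def by blast

definition act_graph :: "(nat \<Rightarrow> 'a) set" where
  "act_graph = {tcat (m + n) z (act (tfst m z) (tsnd m n z)) | z. z \<in> tprod m G X}"

lemma act_graph_in_S: "act_graph \<in> S (m + n + n)"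
  using gs unfolding definable_G_set_def definable_map_def act_graph_def by blast

lemma act_continuous:
  "continuous_map (subtopology (topF (m + n)) (tprod m G X)) (subtopology (topF n) X)
    (\<lambda>z. act (tfst m z) (tsnd m n z))"
  using gs unfolding definable_G_set_def by blast

lemma one_in_G: "\<one>\<^bsub>Gr\<^esub> \<in> G"
  using group_Gr by (simp add: group.is_monoid monoid.one_closed)

lemma mult_in_G: "g \<in> G \<Longrightarrow> h \<in> G \<Longrightarrow> g \<otimes>\<^bsub>Gr\<^esub> h \<in> G"
  using group_Gr by (simp add: group.is_monoid monoid.m_closed)

lemma tprod_subset: "tprod m G X \<subseteq> Fn (m + n)"
  using G_subset X_subset unfolding tprod_def by (auto intro: tcat_in_Fn)

lemma tcat_in_tprod: "g \<in> G \<Longrightarrow> x \<in> X \<Longrightarrow> tcat m g x \<in> tprod m G X"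
  unfolding tprod_def by blast

text \<open>X \<times> G is coded with the coordinates of the point first, so that the tube lemma, which
  fibres over the leading coordinates, fibres X \<times> G over X with the bounded group coordinates
  as the remaining ones.\<close>
definition XG :: "(nat \<Rightarrow> 'a) set" where
  "XG = {z \<in> Fn (n + m). block 0 n z \<in> X \<and> block n m z \<in> G}"

definition phi_act :: "(nat \<Rightarrow> 'a) \<Rightarrow> 'a" where
  "phi_act z = \<phi> (act (block n m z) (block 0 n z))"

lemma tcat_in_XG: "x \<in> X \<Longrightarrow> g \<in> G \<Longrightarrow> tcat n x g \<in> XG"
  using X_subset G_subset unfolding XG_def by (auto intro: tcat_in_Fn)

lemma phi_act_tcat:
  assumes "x \<in> X" "g \<in> G"
  shows "phi_act (tcat n x g) = \<phi> (act g x)"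
proof -
  have "x \<in> Fn n" "g \<in> Fn m" using assms X_subset G_subset by blast+
  then show ?thesis unfolding phi_act_def by simp
qed

lemma XG_subset: "XG \<subseteq> Fn (n + m)"
  unfolding XG_def by blast

lemma XG_E: "z \<in> XG \<Longrightarrow> \<exists>x g. x \<in> X \<and> g \<in> G \<and> z = tcat n x g"
  unfolding XG_def using tcat_block_split by fastforce

lemma XG_restrict_E:
  assumes "y \<in> XG" "restrict y {..<n} = x"
  shows "x \<in> X \<and> (\<exists>g\<in>G. y = tcat n x g)"
proof -
  obtain x' g where xg: "x' \<in> X" "g \<in> G" "y = tcat n x' g"
    using XG_E[OF assms(1)] by blast
  moreover from xg(1) X_subset have "x' \<in> Fn n" by blast
  ultimately have "x' = x"
    using assms(2) by (simp add: Fn_restrict_eq)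
  with xg show ?thesis by blast
qed

lemma tcat_in_XG_iff:
  "x \<in> Fn n \<Longrightarrow> g \<in> Fn m \<Longrightarrow> tcat n x g \<in> XG \<longleftrightarrow> x \<in> X \<and> g \<in> G"
  unfolding XG_def by (simp add: tcat_in_Fn)

lemma XG_in_S: "XG \<in> S (n + m)"
proof -
  have "definable_pred S (n + m) (\<lambda>z. block 0 n z \<in> X \<and> block n m z \<in> G)"
    by (intro definable_pred_conj definable_pred_block_mem[OF X_in_S] definable_pred_block_mem[OF G_in_S])
      auto
  then show ?thesis unfolding definable_pred_def XG_def .
qed

lemma XG_bounded: "z \<in> XG \<Longrightarrow> n \<le> i \<Longrightarrow> i < n + m \<Longrightarrow> a \<le> z i \<and> z i \<le> b"
  using G_bounded[of "block n m z" "i - n"] unfolding XG_def by auto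

lemma XG_closed: "closedin (topF (n + m)) XG"
  unfolding XG_def by (rule closedin_block_prod[OF e0 X_closed G_closed])

lemma act_box_continuous:
  assumes g: "g \<in> G" and x: "x \<in> X" and eps: "0 < \<epsilon>"
  shows "\<exists>\<delta>>0. \<forall>g'\<in>G. \<forall>x'\<in>X.
    in_box m g \<delta> g' \<and> in_box n x \<delta> x' \<longrightarrow> in_box n (act g x) \<epsilon> (act g' x')"
proof -
  have act_tcat: "act (tfst m (tcat m h y)) (tsnd m n (tcat m h y)) = act h y"
    if "h \<in> G" "y \<in> X" for h y
  proof -
    from that G_subset X_subset have "h \<in> Fn m" "y \<in> Fn n" by blast+
    then show ?thesis by simp
  qed
  obtain \<delta> where "0 < \<delta>" and \<delta>: "\<forall>z\<in>tprod m G X. in_box (m + n) (tcat m g x) \<delta> z \<longrightarrow>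
      in_box n (act (tfst m (tcat m g x)) (tsnd m n (tcat m g x))) \<epsilon> (act (tfst m z) (tsnd m n z))"
    using continuous_map_boxD[OF e0 tprod_subset X_subset act_continuous tcat_in_tprod[OF g x] eps]
    by blast
  have "in_box n (act g x) \<epsilon> (act g' x')"
    if "g' \<in> G" "x' \<in> X" "in_box m g \<delta> g'" "in_box n x \<delta> x'" for g' x'
    using \<delta>[rule_format, OF tcat_in_tprod[OF that(1,2)]] that act_tcat g x by (simp add: in_box_tcat)
  with \<open>0 < \<delta>\<close> show ?thesis by blast
qed

lemma phi_act_box_continuous:
  assumes z: "z \<in> XG" and eps: "0 < \<epsilon>"
  shows "\<exists>\<delta>>0. \<forall>z'\<in>XG.
    in_box (n + m) z \<delta> z' \<longrightarrow> phi_act z' < phi_act z + \<epsilon> \<and> phi_act z < phi_act z' + \<epsilon>"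
proof -
  obtain x g where xg: "x \<in> X" "g \<in> G" "z = tcat n x g" using XG_E[OF z] by blast
  obtain \<delta>1 where d1: "0 < \<delta>1"
    "\<forall>y\<in>X. in_box n (act g x) \<delta>1 y \<longrightarrow> \<phi> y < \<phi> (act g x) + \<epsilon> \<and> \<phi> (act g x) < \<phi> y + \<epsilon>"
    using continuous_map_euclidean_boxD[OF e0 X_subset \<phi>_continuous act_closed[OF xg(2,1)] eps]
    by blast
  obtain \<delta> where d: "0 < \<delta>"
    "\<forall>g'\<in>G. \<forall>x'\<in>X. in_box m g \<delta> g' \<and> in_box n x \<delta> x' \<longrightarrow> in_box n (act g x) \<delta>1 (act g' x')"
    using act_box_continuous[OF xg(2,1) d1(1)] by blast
  show ?thesis
  proof (intro exI[of _ \<delta>] conjI ballI impI d(1))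
    fix z' assume z': "z' \<in> XG" "in_box (n + m) z \<delta> z'"
    obtain x' g' where xg': "x' \<in> X" "g' \<in> G" "z' = tcat n x' g'" using XG_E[OF z'(1)] by blast
    have "in_box n x \<delta> x' \<and> in_box m g \<delta> g'"
      using z'(2) xg(3) xg'(3) by (simp add: in_box_tcat)
    then have "in_box n (act g x) \<delta>1 (act g' x')" using d(2) xg' by blast
    then have "\<phi> (act g' x') < \<phi> (act g x) + \<epsilon> \<and> \<phi> (act g x) < \<phi> (act g' x') + \<epsilon>"
      using d1(2) act_closed[OF xg'(2,1)] by blast
    then show "phi_act z' < phi_act z + \<epsilon>" "phi_act z < phi_act z' + \<epsilon>"
      using xg xg' phi_act_tcat by simp_all
  qed
qed

lemma phi_act_local_lower_bound:
  assumes "z \<in> XG" "s < phi_act z"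
  shows "\<exists>e>0. \<exists>c. s < c \<and> (\<forall>z'\<in>XG. in_box (n + m) z e z' \<longrightarrow> c \<le> phi_act z')"
  using phi_act_box_continuous[OF assms(1)] assms(2) by (intro box_continuous_lower_bound) blast+

lemma tcat_in_act_graph_iff:
  assumes gF: "g \<in> Fn m" and xF: "x \<in> Fn n" and yF: "y \<in> Fn n"
  shows "tcat (m + n) (tcat m g x) y \<in> act_graph \<longleftrightarrow> g \<in> G \<and> x \<in> X \<and> act g x = y"
proof
  assume "tcat (m + n) (tcat m g x) y \<in> act_graph"
  then obtain z where z: "z \<in> tprod m G X"
    "tcat (m + n) (tcat m g x) y = tcat (m + n) z (act (tfst m z) (tsnd m n z))"
    unfolding act_graph_def by blast
  obtain g' x' where gx': "g' \<in> G" "x' \<in> X" "z = tcat m g' x'"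
    using z(1) unfolding tprod_def by blast
  have F': "g' \<in> Fn m" "x' \<in> Fn n" using gx' G_subset X_subset by blast+
  have "act (tfst m z) (tsnd m n z) = act g' x'" using gx'(3) F' by simp
  then have eq: "tcat (m + n) (tcat m g x) y = tcat (m + n) (tcat m g' x') (act g' x')"
    using z(2) gx'(3) by simp
  have aF: "act g' x' \<in> Fn n" using act_closed[OF gx'(1,2)] X_subset by blast
  have "tcat m g x = tcat m g' x' \<and> y = act g' x'"
    by (rule tcat_inj[OF tcat_in_Fn[OF gF xF] tcat_in_Fn[OF F'] yF aF eq])
  moreover from this have "g = g' \<and> x = x'" using tcat_inj[OF gF F'(1) xF F'(2)] by blast
  ultimately show "g \<in> G \<and> x \<in> X \<and> act g x = y" using gx' by blast
next
  assume h: "g \<in> G \<and> x \<in> X \<and> act g x = y"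
  then have "tcat m g x \<in> tprod m G X" using tcat_in_tprod by blast
  moreover have "act (tfst m (tcat m g x)) (tsnd m n (tcat m g x)) = y" using h gF xF by simp
  ultimately show "tcat (m + n) (tcat m g x) y \<in> act_graph"
    unfolding act_graph_def by (metis (mono_tags, lifting) mem_Collect_eq)
qed

lemma phi_act_definable: "definable_fun S (n + m) XG phi_act"
proof (rule definable_funI[OF XG_subset])
  let ?K = "n + m + 1"
  \<comment> \<open>Variables: the point in 0..n-1, the group element in n..n+m-1, the value in n+m and
    act g x in the remaining n coordinates.\<close>
  have "definable_pred S (?K + n) (\<lambda>v.
      tcat (m + n) (tcat m (block n m v) (block 0 n v)) (block ?K n v) \<in> act_graph \<and>
      block ?K n v \<in> X \<and> \<phi> (block ?K n v) = v (n + m))"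
    by (intro definable_pred_conj definable_pred_block3_mem[OF act_graph_in_S]
        definable_pred_graph[OF \<phi>_definable X_subset]) auto
  then have "definable_pred S ?K (\<lambda>v. block n m v \<in> G \<and> block 0 n v \<in> X \<and>
      \<phi> (act (block n m v) (block 0 n v)) = v (n + m))"
  proof (rule definable_pred_bex_Fn)
    fix v :: "nat \<Rightarrow> 'a"
    have "(\<exists>y\<in>Fn n. (g \<in> G \<and> x \<in> X \<and> act g x = y) \<and> y \<in> X \<and> \<phi> y = t) \<longleftrightarrow>
        g \<in> G \<and> x \<in> X \<and> \<phi> (act g x) = t" for g x t
      using act_closed X_subset by blast
    then show "(block n m v \<in> G \<and> block 0 n v \<in> X \<and> \<phi> (act (block n m v) (block 0 n v)) = v (n + m)) =
        (\<exists>y\<in>Fn n. tcat (m + n) (tcat m (block n m (tcat ?K v y)) (block 0 n (tcat ?K v y)))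
            (block ?K n (tcat ?K v y)) \<in> act_graph \<and>
          block ?K n (tcat ?K v y) \<in> X \<and> \<phi> (block ?K n (tcat ?K v y)) = tcat ?K v y (n + m))"
      by (simp add: tcat_in_act_graph_iff cong: bex_cong)
  qed
  then show "definable_pred S (n + m + 1)
      (\<lambda>v. block 0 (n + m) v \<in> XG \<and> phi_act (block 0 (n + m) v) = v (n + m))"
    by (rule definable_pred_cong) (auto simp: XG_def phi_act_def)
qed

text \<open>R is the class of admissible lower bounds: it is used with R c = True, to get some lower
  bound, and with R c = (s < c), to get strict lower bounds.\<close>
lemma orbit_tube_lemma:
  assumes R_definable: "definable_pred S 1 (\<lambda>w. R (w 0))" and R_nonempty: "\<exists>c. R c"
    and R_min: "\<And>c1 c2. R c1 \<Longrightarrow> R c2 \<Longrightarrow> R (min c1 c2)"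
    and x0: "x0 \<in> X"
    and local: "\<And>y. y \<in> XG \<Longrightarrow> restrict y {..<n} = x0 \<Longrightarrow>
      \<exists>e>0. \<exists>c. R c \<and> (\<forall>z\<in>XG. in_box (n + m) y e z \<longrightarrow> c \<le> phi_act z)"
  shows "\<exists>e>0. \<exists>c. R c \<and> (\<forall>g\<in>G. \<forall>x\<in>X. in_box n x0 e x \<longrightarrow> c \<le> \<phi> (act g x))"
proof -
  interpret T: tube_setting S "n + m" XG phi_act R a b n e0
    by unfold_locales
      (use dc e0 XG_in_S XG_closed phi_act_definable R_definable R_nonempty R_min ab XG_bounded in auto)
  have "\<exists>e>0. \<exists>c. R c \<and> (\<forall>z\<in>XG. in_box n x0 e z \<longrightarrow> c \<le> phi_act z)"
    using x0 X_subset local by (intro T.tube_lemma[of n m x0]) (auto simp: T.locally_bounded_def)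
  then obtain e c where "0 < e" "R c" "\<forall>z\<in>XG. in_box n x0 e z \<longrightarrow> c \<le> phi_act z"
    by blast
  with tcat_in_XG phi_act_tcat show ?thesis
    by (metis in_box_tcat_left order_refl)
qed

lemma definable_pred_orbit_value:
  assumes "ofs + n \<le> M" "j < M"
  shows "definable_pred S M (\<lambda>v. block ofs n v \<in> X \<and> (\<exists>g\<in>G. \<phi> (act g (block ofs n v)) = v j))"
proof -
  have "definable_pred S (M + m) (\<lambda>w. tcat n (block ofs n w) (block M m w) \<in> XG \<and>
      phi_act (tcat n (block ofs n w) (block M m w)) = w j)"
    using assms by (intro definable_pred_graph2[OF phi_act_definable XG_subset]) simp_all
  then show ?thesis
  proof (rule definable_pred_bex_Fn)
    fix v :: "nat \<Rightarrow> 'a"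
    have "(x \<in> X \<and> (\<exists>g\<in>G. \<phi> (act g x) = t)) \<longleftrightarrow>
        (\<exists>g\<in>Fn m. tcat n x g \<in> XG \<and> phi_act (tcat n x g) = t)" if x: "x \<in> Fn n" for x t
    proof
      assume "x \<in> X \<and> (\<exists>g\<in>G. \<phi> (act g x) = t)"
      with G_subset show "\<exists>g\<in>Fn m. tcat n x g \<in> XG \<and> phi_act (tcat n x g) = t"
        using tcat_in_XG phi_act_tcat by blast
    next
      assume "\<exists>g\<in>Fn m. tcat n x g \<in> XG \<and> phi_act (tcat n x g) = t"
      then obtain g where g: "g \<in> Fn m" "tcat n x g \<in> XG" "phi_act (tcat n x g) = t" by blast
      with tcat_in_XG_iff[OF x g(1)] have "x \<in> X" "g \<in> G" by simp_all
      with g(3) show "x \<in> X \<and> (\<exists>g\<in>G. \<phi> (act g x) = t)" using phi_act_tcat by auto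
    qed
    then show "(block ofs n v \<in> X \<and> (\<exists>g\<in>G. \<phi> (act g (block ofs n v)) = v j)) =
        (\<exists>g\<in>Fn m. tcat n (block ofs n (tcat M v g)) (block M m (tcat M v g)) \<in> XG \<and>
          phi_act (tcat n (block ofs n (tcat M v g)) (block M m (tcat M v g))) = tcat M v g j)"
      using assms by simp
  qed
qed

lemma definable_pred_orbit_lower_bound:
  assumes "ofs + n \<le> M" "j < M"
  shows "definable_pred S M (\<lambda>v. block ofs n v \<in> X \<and> (\<forall>g\<in>G. v j \<le> \<phi> (act g (block ofs n v))))"
proof -
  have "definable_pred S (Suc M)
      (\<lambda>v. block ofs n v \<in> X \<and> (\<exists>g\<in>G. \<phi> (act g (block ofs n v)) = v M) \<longrightarrow> v j \<le> v M)"
    using assms by (intro definable_pred_imp definable_pred_orbit_value definable_pred_le) auto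
  then have "definable_pred S M
      (\<lambda>v. \<forall>t. block ofs n v \<in> X \<and> (\<exists>g\<in>G. \<phi> (act g (block ofs n v)) = t) \<longrightarrow> v j \<le> t)"
    by (rule definable_pred_all) (use assms in simp)
  then have "definable_pred S M (\<lambda>v. block ofs n v \<in> X \<and>
      (\<forall>t. block ofs n v \<in> X \<and> (\<exists>g\<in>G. \<phi> (act g (block ofs n v)) = t) \<longrightarrow> v j \<le> t))"
    using assms by (intro definable_pred_conj definable_pred_block_mem[OF X_in_S])
  then show ?thesis
    by (rule definable_pred_cong) auto
qed

definition orbit_values :: "(nat \<Rightarrow> 'a) \<Rightarrow> 'a set" where
  "orbit_values x = {\<phi> (act g x) | g. g \<in> G}"

lemma mem_orbit_values: "t \<in> orbit_values x \<longleftrightarrow> (\<exists>g\<in>G. \<phi> (act g x) = t)"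
  unfolding orbit_values_def by blast

lemma definable_pred_orbit_values:
  assumes "x0 \<in> X"
  shows "definable_pred S 1 (\<lambda>w. w 0 \<in> orbit_values x0)"
proof -
  have "definable_pred S (1 + n) (\<lambda>v. block 1 n v \<in> X \<and> (\<exists>g\<in>G. \<phi> (act g (block 1 n v)) = v 0))"
    by (rule definable_pred_orbit_value) auto
  moreover have "x0 \<in> Fn n" using assms X_subset by blast
  ultimately have "definable_pred S 1 (\<lambda>w. x0 \<in> X \<and> (\<exists>g\<in>G. \<phi> (act g x0) = w 0))"
    using definable_pred_param by fastforce
  then show ?thesis
    by (rule definable_pred_cong) (use assms in \<open>simp add: mem_orbit_values\<close>)
qed

lemma orbit_values_bdd_below:
  assumes "x0 \<in> X"
  shows "\<exists>c. \<forall>g\<in>G. c \<le> \<phi> (act g x0)"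
proof -
  have "\<exists>e>0. \<exists>c. True \<and> (\<forall>g\<in>G. \<forall>x\<in>X. in_box n x0 e x \<longrightarrow> c \<le> \<phi> (act g x))"
  proof (rule orbit_tube_lemma[where R = "\<lambda>_. True", OF definable_pred_True _ _ assms])
    fix y assume "y \<in> XG"
    moreover have "phi_act y - e0 < phi_act y" using e0 by simp
    ultimately show "\<exists>e>0. \<exists>c. True \<and> (\<forall>z\<in>XG. in_box (n + m) y e z \<longrightarrow> c \<le> phi_act z)"
      using phi_act_local_lower_bound by blast
  qed auto
  with assms show ?thesis using in_box_refl by blast
qed

lemma orbit_values_has_inf:
  assumes "x0 \<in> X"
  shows "\<exists>s. is_inf (orbit_values x0) s"
  using definably_complete_has_inf[OF dc definable_pred_orbit_values[OF assms]]
    one_in_G orbit_values_bdd_below[OF assms]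
  unfolding orbit_values_def by auto

lemma orbit_values_inf_attained:
  assumes x0: "x0 \<in> X" and s: "is_inf (orbit_values x0) s"
  shows "\<exists>g\<in>G. s = \<phi> (act g x0)"
proof (rule ccontr)
  assume not_attained: "\<not> (\<exists>g\<in>G. s = \<phi> (act g x0))"
  have "\<exists>e>0. \<exists>c. s < c \<and> (\<forall>g\<in>G. \<forall>x\<in>X. in_box n x0 e x \<longrightarrow> c \<le> \<phi> (act g x))"
  proof (rule orbit_tube_lemma[where R = "\<lambda>c. s < c", OF _ _ _ x0])
    show "definable_pred S 1 (\<lambda>w. s < w 0)" by (rule definable_pred_const_less) simp
    show "\<exists>c. s < c" using e0 by (intro exI[of _ "s + e0"]) simp
    fix y assume y: "y \<in> XG" "restrict y {..<n} = x0"
    then obtain g where g: "g \<in> G" "y = tcat n x0 g" using XG_restrict_E by blast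
    then have "phi_act y = \<phi> (act g x0)" using phi_act_tcat[OF x0] by simp
    with s g(1) not_attained have "s < phi_act y"
      unfolding is_inf_def orbit_values_def by (metis (mono_tags, lifting) mem_Collect_eq order_less_le)
    then show "\<exists>e>0. \<exists>c. s < c \<and> (\<forall>z\<in>XG. in_box (n + m) y e z \<longrightarrow> c \<le> phi_act z)"
      using phi_act_local_lower_bound[OF y(1)] by blast
  qed auto
  then obtain e c where ec: "0 < e" "s < c" "\<forall>g\<in>G. \<forall>x\<in>X. in_box n x0 e x \<longrightarrow> c \<le> \<phi> (act g x)"
    by blast
  then have "c \<le> s"
    using s x0 in_box_refl[OF ec(1)] unfolding is_inf_def orbit_values_def by blast
  with ec(2) show False by simp
qed

text \<open>Outside X the infimum need not exist, and SOME then returns an arbitrary value.\<close>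
definition \<Phi> :: "(nat \<Rightarrow> 'a) \<Rightarrow> 'a" where
  "\<Phi> x = (SOME s. is_inf (orbit_values x) s)"

lemma \<Phi>_is_inf: "x \<in> X \<Longrightarrow> is_inf (orbit_values x) (\<Phi> x)"
  unfolding \<Phi>_def using orbit_values_has_inf by (rule someI_ex)

lemma \<Phi>_attained: "x \<in> X \<Longrightarrow> \<exists>g\<in>G. \<Phi> x = \<phi> (act g x)"
  using orbit_values_inf_attained \<Phi>_is_inf by blast

lemma \<Phi>_le: "x \<in> X \<Longrightarrow> g \<in> G \<Longrightarrow> \<Phi> x \<le> \<phi> (act g x)"
  using \<Phi>_is_inf unfolding is_inf_def orbit_values_def by blast

lemma \<Phi>_eq_iff:
  assumes "x \<in> X"
  shows "t = \<Phi> x \<longleftrightarrow> (\<exists>g\<in>G. \<phi> (act g x) = t) \<and> (\<forall>g\<in>G. t \<le> \<phi> (act g x))"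
proof
  assume "(\<exists>g\<in>G. \<phi> (act g x) = t) \<and> (\<forall>g\<in>G. t \<le> \<phi> (act g x))"
  then have "is_inf (orbit_values x) t"
    unfolding is_inf_def orbit_values_def by blast
  then show "t = \<Phi> x"
    using is_inf_unique \<Phi>_is_inf[OF assms] by blast
qed (use \<Phi>_attained[OF assms] \<Phi>_le[OF assms] in metis)

lemma \<Phi>_definable: "definable_fun S n X \<Phi>"
proof (rule definable_funI[OF X_subset])
  have "definable_pred S (n + 1) (\<lambda>v. (block 0 n v \<in> X \<and> (\<exists>g\<in>G. \<phi> (act g (block 0 n v)) = v n)) \<and>
      (block 0 n v \<in> X \<and> (\<forall>g\<in>G. v n \<le> \<phi> (act g (block 0 n v)))))"
    by (intro definable_pred_conj definable_pred_orbit_value definable_pred_orbit_lower_bound) auto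
  then show "definable_pred S (n + 1) (\<lambda>v. block 0 n v \<in> X \<and> \<Phi> (block 0 n v) = v n)"
    by (rule definable_pred_cong) (metis \<Phi>_eq_iff)
qed

lemma orbit_values_act:
  assumes g: "g \<in> G" and x: "x \<in> X"
  shows "orbit_values (act g x) = orbit_values x"
proof (intro equalityI subsetI)
  fix t assume "t \<in> orbit_values (act g x)"
  then obtain h where h: "h \<in> G" "\<phi> (act h (act g x)) = t"
    by (auto simp: mem_orbit_values)
  then have "\<phi> (act (h \<otimes>\<^bsub>Gr\<^esub> g) x) = t"
    using act_mult[OF h(1) g x] by simp
  with mult_in_G[OF h(1) g] show "t \<in> orbit_values x"
    by (auto simp: mem_orbit_values)
next
  fix t assume "t \<in> orbit_values x"
  then obtain k where k: "k \<in> G" "\<phi> (act k x) = t"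
    by (auto simp: mem_orbit_values)
  let ?h = "k \<otimes>\<^bsub>Gr\<^esub> inv\<^bsub>Gr\<^esub> g"
  have h: "?h \<in> G"
    using k(1) group.inv_closed[OF group_Gr g] by (rule mult_in_G)
  have "k = ?h \<otimes>\<^bsub>Gr\<^esub> g"
    using group.inv_solve_right[OF group_Gr h k(1) g] by simp
  with act_mult[OF h g x] k have "\<phi> (act ?h (act g x)) = t" by simp
  with h show "t \<in> orbit_values (act g x)"
    by (auto simp: mem_orbit_values)
qed

lemma \<Phi>_act: "g \<in> G \<Longrightarrow> x \<in> X \<Longrightarrow> \<Phi> (act g x) = \<Phi> x"
  unfolding \<Phi>_def using orbit_values_act by simp

lemma \<Phi>_upper:
  assumes x0: "x0 \<in> X" and e: "0 < e"
  shows "\<exists>\<delta>>0. \<forall>x\<in>X. in_box n x0 \<delta> x \<longrightarrow> \<Phi> x < \<Phi> x0 + e"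
proof -
  obtain g0 where g0: "g0 \<in> G" "\<Phi> x0 = \<phi> (act g0 x0)"
    using \<Phi>_attained[OF x0] by blast
  obtain \<delta> where "0 < \<delta>"
    and \<delta>: "\<forall>z\<in>XG. in_box (n + m) (tcat n x0 g0) \<delta> z \<longrightarrow> phi_act z < phi_act (tcat n x0 g0) + e"
    using phi_act_box_continuous[OF tcat_in_XG[OF x0 g0(1)] e] by blast
  have "\<Phi> x < \<Phi> x0 + e" if x: "x \<in> X" "in_box n x0 \<delta> x" for x
  proof -
    have "in_box (n + m) (tcat n x0 g0) \<delta> (tcat n x g0)"
      using x(2) in_box_refl[OF \<open>0 < \<delta>\<close>] by (simp add: in_box_tcat)
    then have "\<phi> (act g0 x) < \<Phi> x0 + e"
      using \<delta> tcat_in_XG[OF x(1) g0(1)] phi_act_tcat[OF x(1) g0(1)] phi_act_tcat[OF x0 g0(1)] g0(2)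
      by auto
    then show ?thesis
      using \<Phi>_le[OF x(1) g0(1)] by (meson le_less_trans)
  qed
  with \<open>0 < \<delta>\<close> show ?thesis by blast
qed

lemma \<Phi>_lower:
  assumes x0: "x0 \<in> X" and e: "0 < e"
  shows "\<exists>\<delta>>0. \<forall>x\<in>X. in_box n x0 \<delta> x \<longrightarrow> \<Phi> x0 < \<Phi> x + e"
proof -
  have "\<exists>\<delta>>0. \<exists>c. \<Phi> x0 - e < c \<and> (\<forall>g\<in>G. \<forall>x\<in>X. in_box n x0 \<delta> x \<longrightarrow> c \<le> \<phi> (act g x))"
  proof (rule orbit_tube_lemma[where R = "\<lambda>c. \<Phi> x0 - e < c", OF _ _ _ x0])
    show "definable_pred S 1 (\<lambda>w. \<Phi> x0 - e < w 0)" by (rule definable_pred_const_less) simp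
    show "\<exists>c. \<Phi> x0 - e < c" using e by (intro exI[of _ "\<Phi> x0"]) simp
    fix y assume y: "y \<in> XG" "restrict y {..<n} = x0"
    then obtain g where g: "g \<in> G" "y = tcat n x0 g" using XG_restrict_E by blast
    have "\<Phi> x0 - e < \<Phi> x0" using e by simp
    also have "\<Phi> x0 \<le> phi_act y"
      using \<Phi>_le[OF x0 g(1)] phi_act_tcat[OF x0 g(1)] g(2) by simp
    finally have "\<Phi> x0 - e < phi_act y" .
    then show "\<exists>\<delta>>0. \<exists>c. \<Phi> x0 - e < c \<and> (\<forall>z\<in>XG. in_box (n + m) y \<delta> z \<longrightarrow> c \<le> phi_act z)"
      using phi_act_local_lower_bound[OF y(1)] by blast
  qed auto
  then obtain \<delta> c where \<delta>: "0 < \<delta>" "\<Phi> x0 - e < c" "\<forall>g\<in>G. \<forall>x\<in>X. in_box n x0 \<delta> x \<longrightarrow> c \<le> \<phi> (act g x)"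
    by blast
  have "\<Phi> x0 < \<Phi> x + e" if "x \<in> X" "in_box n x0 \<delta> x" for x
  proof -
    obtain g where "g \<in> G" "\<Phi> x = \<phi> (act g x)" using \<Phi>_attained[OF \<open>x \<in> X\<close>] by blast
    with \<delta> that have "\<Phi> x0 - e < \<Phi> x" by fastforce
    then show ?thesis by (simp add: algebra_simps)
  qed
  with \<delta>(1) show ?thesis by blast
qed

lemma \<Phi>_continuous: "continuous_map (subtopology (topF n) X) euclidean \<Phi>"
proof (rule continuous_map_euclidean_boxI[OF X_subset])
  fix x0 U assume x0: "x0 \<in> X" and U: "open U" "\<Phi> x0 \<in> U"
  obtain e where e: "0 < e" "\<forall>y. y < \<Phi> x0 + e \<and> \<Phi> x0 < y + e \<longrightarrow> y \<in> U"
    using open_interval_nbhd[OF U e0] by blast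
  obtain \<delta>1 \<delta>2 where "0 < \<delta>1" "\<forall>x\<in>X. in_box n x0 \<delta>1 x \<longrightarrow> \<Phi> x < \<Phi> x0 + e"
    and "0 < \<delta>2" "\<forall>x\<in>X. in_box n x0 \<delta>2 x \<longrightarrow> \<Phi> x0 < \<Phi> x + e"
    using \<Phi>_upper[OF x0 e(1)] \<Phi>_lower[OF x0 e(1)] by blast
  then show "\<exists>\<delta>>0. \<forall>x\<in>X. in_box n x0 \<delta> x \<longrightarrow> \<Phi> x \<in> U"
    using e(2) in_box_mono[of n x0 "min \<delta>1 \<delta>2"] by (intro exI[of _ "min \<delta>1 \<delta>2"]) auto
qed

end

lemma trivial_if_no_positive:
  fixes y :: "'a::linordered_ab_group_add"
  assumes "\<not> (\<exists>e::'a. 0 < e)"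
  shows "y = 0"
  using assms neg_0_less_iff_less not_less_iff_gr_or_eq by metis

theorem lemma2p1:
  fixes S :: "nat \<Rightarrow> (nat \<Rightarrow> 'a::{linordered_ab_group_add,linorder_topology}) set set"
    and Gr :: "(nat \<Rightarrow> 'a) monoid"
    and m n :: nat
    and X :: "(nat \<Rightarrow> 'a) set"
    and act :: "(nat \<Rightarrow> 'a) \<Rightarrow> (nat \<Rightarrow> 'a) \<Rightarrow> (nat \<Rightarrow> 'a)"
    and \<phi> :: "(nat \<Rightarrow> 'a) \<Rightarrow> 'a"
  assumes "expansion_structure S"
    and "definably_complete S"
    and "definable_top_group S m Gr"
    and "definably_compact m (carrier Gr)"
    and "definable_G_set S m Gr n X act"
    and "closedin (topF n) X"
    and "definable_fun S n X \<phi>"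
    and "continuous_map (subtopology (topF n) X) euclidean \<phi>"
  shows "\<exists>\<Phi>. (\<forall>x\<in>X. is_inf {\<phi> (act g x) | g. g \<in> carrier Gr} (\<Phi> x))
           \<and> definable_fun S n X \<Phi>
           \<and> (\<forall>g\<in>carrier Gr. \<forall>x\<in>X. \<Phi> (act g x) = \<Phi> x)
           \<and> continuous_map (subtopology (topF n) X) euclidean \<Phi>
           \<and> (\<forall>x\<in>X. \<exists>g\<in>carrier Gr. \<Phi> x = \<phi> (act g x))"
proof (cases "\<exists>e::'a. 0 < e")
  case False
  \<comment> \<open>Then F is the trivial group and \<phi> itself has all the properties.\<close>
  then have const: "y = z" for y z :: 'a
    using trivial_if_no_positive by metis
  then have le: "y \<le> z" for y z :: 'a
    by (metis order_refl)
  have "\<one>\<^bsub>Gr\<^esub> \<in> carrier Gr"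
    using assms(3) unfolding definable_top_group_def by (simp add: group.is_monoid monoid.one_closed)
  with const show ?thesis
    using assms(7,8) le by (intro exI[of _ \<phi>]) (auto simp: is_inf_def)
next
  case True
  then obtain e0 :: 'a where "0 < e0" by blast
  obtain a b where "\<forall>g\<in>carrier Gr. \<forall>i<m. a \<le> g i \<and> g i \<le> b" "closedin (topF m) (carrier Gr)"
    using assms(4) unfolding definably_compact_def by blast
  \<comment> \<open>min a b guarantees a lower bound below b even when m = 0.\<close>
  then interpret orbit_setting S Gr m n X act \<phi> e0 "min a b" b
    using assms \<open>0 < e0\<close> by unfold_locales (auto simp: min.coboundedI1)
  show ?thesis
    using \<Phi>_is_inf \<Phi>_definable \<Phi>_act \<Phi>_continuous \<Phi>_attained
    unfolding orbit_values_def by blast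
qed

end
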